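(* For every pair of finite objects $(\widetilde X_1,\gamma_1,\omega_1,\mathfrak a_1)$ and $(\widetilde X_2,\gamma_2,\omega_2,\mathfrak a_2)$ of $\mathscr C_{d,k}$ there exists a finite link-connected object $(\widetilde Y,\gamma,\omega,\mathfrak a)$ of $\mathscr C_{d,k}$ together with surjective morphisms $\pi_i:(\widetilde Y,\gamma,\omega,\mathfrak a)\to(\widetilde X_i,\gamma_i,\omega_i,\mathfrak a_i)$ for $i=1,2$.
   Context: Fix $d,k\ge1$, $[\![d]\!]=\{0,\dots,d\}$. Multicomplexes: a $d$-multicomplex is a triple $\widetilde X=(X,\mathsf m,\mathsf g)$ where $X$ is a $d$-dimensional simplicial complex on a countable vertex set, $\mathsf m:X\to\mathbb N$ equals $1$ on the empty cell and on vertices, multicells are pairs $(\tau,r)$, $\tau\in X$, $1\le r\le\mathsf m(\tau)$ (dimension $\dim\tau$), and $\mathsf g$ assigns to each multicell $(\tau,r)$ and each codimension-one face $\sigma$ of $\tau$ a multicell $\mathsf g((\tau,r),\sigma)=(\sigma,s)$; containment $\preceq$ is the reflexive–transitive closure of "$\mathfrak b=\mathsf g(\mathfrak a,\sigma)$"; consistency: if $(\sigma,s),(\sigma',s')$ have equal dimension, lie in a common multicell, and $\rho=\sigma\cap\sigma'$ has codimension one in both, then $\mathsf g((\sigma,s),\rho)=\mathsf g((\sigma',s'),\rho)$. $\widetilde X$ is pure if every multicell lies in a $d$-multicell; two $d$-multicells are neighbors if they contain a common $(d-1)$-multicell; $d$-lower path connected means any two $d$-multicells are joined by a chain of neighbors.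 For a $(d-1)$-multicell $\mathfrak b$, $\delta(\mathfrak b)$ is the set of $d$-multicells containing it, $\deg\mathfrak b=|\delta(\mathfrak b)|$. $\widetilde X$ is link-connected if for every multicell $\mathfrak a$ of dimension $j\le d-2$ (including the empty one) the multigraph with vertices the $(j+1)$-multicells containing $\mathfrak a$ and edges the $(j+2)$-multicells containing $\mathfrak a$ is connected. A coloring is a map $\gamma$ from vertices to $[\![d]\!]$ injective on each $d$-cell, extended to cells and multicells by $\gamma(\sigma)=\{\gamma(v):v\in\sigma\}$. A $k$-ordering $\omega$ assigns to each $(d-1)$-multicell $\mathfrak b$ a homomorphism $\omega_{\mathfrak b}:\mathbb Z/k\mathbb Z\to\mathrm{Sym}(\delta(\mathfrak b))$ with transitive image. Objects of $\mathscr C_{d,k}$: quartets $(\widetilde X,\gamma,\omega,\mathfrak a_0)$ with $\widetilde X$ a pure, colorable, $d$-lower path connected $d$-multicomplex all of whose $(d-1)$-multicells have degree $\le k$, $\gamma$ a coloring, $\omega$ a $k$-ordering, $\mathfrak a_0$ a $d$-multicell. Morphisms: maps $\widetilde\varphi$ on multicells lying over a simplicial map of the underlying complexes, commuting with gluing, preserving root, colors, and orderings ($\widetilde\varphi(\omega_{\mathfrak b}(l).\mathfrak a)=\widehat\omega_{\widetilde\varphi(\mathfrak b)}(l).\widetilde\varphi(\mathfrak a)$). An object is finite if it has finitely many multicells; a morphism is surjective if it is surjective on multicells. *)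

theory Defs
  imports Main
begin

text \<open>A cell is a finite set of
vertices; a multicell is a pair (tau, r) with 1 <= r <= mult tau. The gluing map returns
the index s of the multicell (sigma, s) = g((tau,r), sigma).\<close>

record mcomplex =
  cells :: "nat set set"
  mult  :: "nat set \<Rightarrow> nat"
  glue  :: "nat set \<times> nat \<Rightarrow> nat set \<Rightarrow> nat"

type_synonym mcell = "nat set \<times> nat"

definition simplicial_complex :: "nat \<Rightarrow> nat set set \<Rightarrow> bool" where
  "simplicial_complex d X \<longleftrightarrow>
     {} \<in> X \<and>
     (\<forall>\<tau>\<in>X. finite \<tau> \<and> card \<tau> \<le> d + 1 \<and> (\<forall>\<sigma>. \<sigma> \<subseteq> \<tau> \<longrightarrow> \<sigma> \<in> X)) \<and>
     (\<exists>\<tau>\<in>X. card \<tau> = d + 1)"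

definition face1 :: "nat set \<Rightarrow> nat set \<Rightarrow> bool" where
  "face1 \<sigma> \<tau> \<longleftrightarrow> finite \<tau> \<and> \<sigma> \<subseteq> \<tau> \<and> card \<sigma> + 1 = card \<tau>"

definition multicells :: "mcomplex \<Rightarrow> mcell set" where
  "multicells M = {(\<tau>, r). \<tau> \<in> cells M \<and> 1 \<le> r \<and> r \<le> mult M \<tau>}"

text \<open>multicells of dimension j, i.e. whose cell has j+1 vertices (indexed by card)\<close>
definition mcells_card :: "mcomplex \<Rightarrow> nat \<Rightarrow> mcell set" where
  "mcells_card M n = {a \<in> multicells M. card (fst a) = n}"

definition gstep :: "mcomplex \<Rightarrow> mcell \<Rightarrow> mcell \<Rightarrow> bool" where
  "gstep M b a \<longleftrightarrow> a \<in> multicells M \<and> (\<exists>\<sigma>. face1 \<sigma> (fst a) \<and> b = (\<sigma>, glue M a \<sigma>))"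

definition contained :: "mcomplex \<Rightarrow> mcell \<Rightarrow> mcell \<Rightarrow> bool" where
  "contained M b a \<longleftrightarrow> (gstep M)\<^sup>*\<^sup>* b a"

definition multicomplex :: "nat \<Rightarrow> mcomplex \<Rightarrow> bool" where
  "multicomplex d M \<longleftrightarrow>
     simplicial_complex d (cells M) \<and>
     mult M {} = 1 \<and>
     (\<forall>v. {v} \<in> cells M \<longrightarrow> mult M {v} = 1) \<and>
     (\<forall>\<tau>\<in>cells M. 1 \<le> mult M \<tau>) \<and>
     (\<forall>a\<in>multicells M. \<forall>\<sigma>. face1 \<sigma> (fst a) \<longrightarrow>
         1 \<le> glue M a \<sigma> \<and> glue M a \<sigma> \<le> mult M \<sigma>) \<and>
     (\<forall>s1\<in>multicells M. \<forall>s2\<in>multicells M. \<forall>c\<in>multicells M.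
         card (fst s1) = card (fst s2) \<and> contained M s1 c \<and> contained M s2 c \<and>
         face1 (fst s1 \<inter> fst s2) (fst s1) \<and> face1 (fst s1 \<inter> fst s2) (fst s2) \<longrightarrow>
         glue M s1 (fst s1 \<inter> fst s2) = glue M s2 (fst s1 \<inter> fst s2))"

definition pure :: "nat \<Rightarrow> mcomplex \<Rightarrow> bool" where
  "pure d M \<longleftrightarrow> (\<forall>a\<in>multicells M. \<exists>c\<in>mcells_card M (d + 1). contained M a c)"

definition neighbors :: "nat \<Rightarrow> mcomplex \<Rightarrow> mcell \<Rightarrow> mcell \<Rightarrow> bool" where
  "neighbors d M a a' \<longleftrightarrow> a \<in> mcells_card M (d + 1) \<and> a' \<in> mcells_card M (d + 1) \<and>
     (\<exists>b\<in>mcells_card M d. contained M b a \<and> contained M b a')"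

definition lower_path_connected :: "nat \<Rightarrow> mcomplex \<Rightarrow> bool" where
  "lower_path_connected d M \<longleftrightarrow>
     (\<forall>a\<in>mcells_card M (d + 1). \<forall>a'\<in>mcells_card M (d + 1). (neighbors d M)\<^sup>*\<^sup>* a a')"

definition delta :: "nat \<Rightarrow> mcomplex \<Rightarrow> mcell \<Rightarrow> mcell set" where
  "delta d M b = {a \<in> mcells_card M (d + 1). contained M b a}"

definition degree_bounded :: "nat \<Rightarrow> nat \<Rightarrow> mcomplex \<Rightarrow> bool" where
  "degree_bounded d k M \<longleftrightarrow>
     (\<forall>b\<in>mcells_card M d. finite (delta d M b) \<and> card (delta d M b) \<le> k)"

text \<open>link graph of a multicell a: vertices are the multicells one dimension higher
containing a, edges the multicells two dimensions higher containing a; an edge c is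
incident to a vertex b iff b is contained in c.\<close>
definition link_vertices :: "mcomplex \<Rightarrow> mcell \<Rightarrow> mcell set" where
  "link_vertices M a = {b \<in> mcells_card M (card (fst a) + 1). contained M a b}"

definition link_adj :: "mcomplex \<Rightarrow> mcell \<Rightarrow> mcell \<Rightarrow> mcell \<Rightarrow> bool" where
  "link_adj M a b b' \<longleftrightarrow> b \<in> link_vertices M a \<and> b' \<in> link_vertices M a \<and>
     (\<exists>c\<in>mcells_card M (card (fst a) + 2).
        contained M a c \<and> contained M b c \<and> contained M b' c)"

definition link_connected :: "nat \<Rightarrow> mcomplex \<Rightarrow> bool" where
  "link_connected d M \<longleftrightarrow>
     (\<forall>a\<in>multicells M. card (fst a) + 1 \<le> d \<longrightarrow>
        (\<forall>b\<in>link_vertices M a. \<forall>b'\<in>link_vertices M a. (link_adj M a)\<^sup>*\<^sup>* b b'))"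

definition coloring :: "nat \<Rightarrow> mcomplex \<Rightarrow> (nat \<Rightarrow> nat) \<Rightarrow> bool" where
  "coloring d M \<gamma> \<longleftrightarrow>
     (\<forall>v. {v} \<in> cells M \<longrightarrow> \<gamma> v \<le> d) \<and>
     (\<forall>\<tau>\<in>cells M. card \<tau> = d + 1 \<longrightarrow> inj_on \<gamma> \<tau>)"

definition colorable :: "nat \<Rightarrow> mcomplex \<Rightarrow> bool" where
  "colorable d M \<longleftrightarrow> (\<exists>\<gamma>. coloring d M \<gamma>)"

text \<open>k-ordering: for each (d-1)-multicell b, l \<mapsto> omega b l (l < k, read as residues mod k)
is a homomorphism Z/kZ \<rightarrow> Sym(delta b) with transitive image.\<close>
definition k_ordering :: "nat \<Rightarrow> nat \<Rightarrow> mcomplex \<Rightarrow> (mcell \<Rightarrow> nat \<Rightarrow> mcell \<Rightarrow> mcell) \<Rightarrow> bool" where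
  "k_ordering d k M \<omega> \<longleftrightarrow>
     (\<forall>b\<in>mcells_card M d.
        (\<forall>l<k. bij_betw (\<omega> b l) (delta d M b) (delta d M b)) \<and>
        (\<forall>x\<in>delta d M b. \<omega> b 0 x = x) \<and>
        (\<forall>l<k. \<forall>l'<k. \<forall>x\<in>delta d M b. \<omega> b ((l + l') mod k) x = \<omega> b l (\<omega> b l' x)) \<and>
        (\<forall>x\<in>delta d M b. \<forall>y\<in>delta d M b. \<exists>l<k. \<omega> b l x = y))"

definition obj :: "nat \<Rightarrow> nat \<Rightarrow> mcomplex \<Rightarrow> (nat \<Rightarrow> nat) \<Rightarrow>
    (mcell \<Rightarrow> nat \<Rightarrow> mcell \<Rightarrow> mcell) \<Rightarrow> mcell \<Rightarrow> bool" where
  "obj d k M \<gamma> \<omega> a0 \<longleftrightarrow>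
     multicomplex d M \<and> pure d M \<and> colorable d M \<and> lower_path_connected d M \<and>
     degree_bounded d k M \<and> coloring d M \<gamma> \<and> k_ordering d k M \<omega> \<and>
     a0 \<in> mcells_card M (d + 1)"

definition morphism :: "nat \<Rightarrow> nat \<Rightarrow>
    mcomplex \<Rightarrow> (nat \<Rightarrow> nat) \<Rightarrow> (mcell \<Rightarrow> nat \<Rightarrow> mcell \<Rightarrow> mcell) \<Rightarrow> mcell \<Rightarrow>
    mcomplex \<Rightarrow> (nat \<Rightarrow> nat) \<Rightarrow> (mcell \<Rightarrow> nat \<Rightarrow> mcell \<Rightarrow> mcell) \<Rightarrow> mcell \<Rightarrow>
    (mcell \<Rightarrow> mcell) \<Rightarrow> bool" where
  "morphism d k M1 \<gamma>1 \<omega>1 a1 M2 \<gamma>2 \<omega>2 a2 \<phi> \<longleftrightarrow>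
     (\<forall>a\<in>multicells M1. \<phi> a \<in> multicells M2) \<and>
     (\<exists>f :: nat \<Rightarrow> nat.
        (\<forall>\<tau>\<in>cells M1. f ` \<tau> \<in> cells M2) \<and>
        (\<forall>a\<in>multicells M1. fst (\<phi> a) = f ` fst a) \<and>
        (\<forall>a\<in>multicells M1. \<forall>\<sigma>. face1 \<sigma> (fst a) \<longrightarrow>
            \<phi> (\<sigma>, glue M1 a \<sigma>) = (f ` \<sigma>, glue M2 (\<phi> a) (f ` \<sigma>)))) \<and>
     \<phi> a1 = a2 \<and>
     (\<forall>a\<in>multicells M1. \<gamma>2 ` fst (\<phi> a) = \<gamma>1 ` fst a) \<and>
     (\<forall>b\<in>mcells_card M1 d. \<forall>a\<in>delta d M1 b. \<forall>l<k.
        \<phi> (\<omega>1 b l a) = \<omega>2 (\<phi> b) l (\<phi> a))"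

definition surjective_morphism :: "mcomplex \<Rightarrow> mcomplex \<Rightarrow> (mcell \<Rightarrow> mcell) \<Rightarrow> bool" where
  "surjective_morphism M1 M2 \<phi> \<longleftrightarrow> \<phi> ` multicells M1 = multicells M2"

end

theory Submission
  imports Defs "HOL-Library.Nat_Bijection"
begin

text \<open>
  In an object of \<open>\<C>\<^sub>d\<^sub>,\<^sub>k\<close> the ordering turns each colour \<open>i\<close> into rotations \<open>\<rho>\<^sub>i\<^sup>l\<close> of the
  chambers: \<open>\<rho>\<^sub>i\<^sup>l c = \<omega>(b, l) c\<close> for the panel \<open>b\<close> of \<open>c\<close> missing colour \<open>i\<close>. Any finite set \<open>P\<close>
  with such rotations, generated by them from a base point, defines a multicomplex \<open>Y\<close>: a
  \<open>J\<close>-residue (an orbit of the rotations with colours in \<open>J\<close>) is a multicell whose vertices are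
  the \<open>({..d} - {i})\<close>-residues containing it, \<open>i \<notin> J\<close>. The link of a \<open>J\<close>-residue with
  \<open>|J| \<ge> 2\<close> is connected, because rotating with one colour of \<open>J\<close> fixes the facets of every
  other colour; so \<open>Y\<close> is link-connected. A rotation-equivariant map from \<open>P\<close> to the chambers
  of \<open>X\<close> induces a morphism \<open>Y \<rightarrow> X\<close>, surjective because lower path connectedness lets the
  rotations reach every chamber. For the theorem, \<open>P\<close> is the orbit of \<open>(a\<^sub>1, a\<^sub>2)\<close> under the
  diagonal rotations of \<open>X\<^sub>1 \<times> X\<^sub>2\<close>, with the two projections as equivariant maps.
\<close>

section \<open>Faces in a multicomplex\<close>

lemma face1_Int:
  assumes fa: "finite A" and t1: "face1 \<tau>1 A" and t2: "face1 \<tau>2 A" and ne: "\<tau>1 \<noteq> \<tau>2"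
  shows "face1 (\<tau>1 \<inter> \<tau>2) \<tau>1 \<and> face1 (\<tau>1 \<inter> \<tau>2) \<tau>2"
proof -
  have sub: "\<tau>1 \<subseteq> A" "\<tau>2 \<subseteq> A" and ct: "card \<tau>1 + 1 = card A" "card \<tau>2 + 1 = card A"
    using t1 t2 unfolding face1_def by auto
  have fin: "finite \<tau>1" "finite \<tau>2" using sub fa finite_subset by auto
  have un: "\<tau>1 \<union> \<tau>2 = A"
  proof (rule ccontr)
    assume "\<tau>1 \<union> \<tau>2 \<noteq> A"
    hence "card (\<tau>1 \<union> \<tau>2) < card A" using sub by (intro psubset_card_mono[OF fa]) auto
    hence "card (\<tau>1 \<union> \<tau>2) \<le> card \<tau>1" using ct by linarith
    moreover have "card \<tau>1 \<le> card (\<tau>1 \<union> \<tau>2)" using fin by (intro card_mono) auto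
    ultimately have "\<tau>1 = \<tau>1 \<union> \<tau>2" using fin by (intro card_subset_eq) auto
    hence "\<tau>2 \<subseteq> \<tau>1" by auto
    hence "\<tau>2 = \<tau>1" by (rule card_subset_eq[OF fin(1)]) (use ct in simp)
    thus False using ne by auto
  qed
  have "card \<tau>1 + card \<tau>2 = card A + card (\<tau>1 \<inter> \<tau>2)" using card_Un_Int[OF fin] un by simp
  thus ?thesis using fin ct unfolding face1_def by auto
qed

locale d_multicomplex =
  fixes d :: nat and X :: mcomplex
  assumes X_multicomplex: "multicomplex d X"
begin

lemma X_simplicial_complex: "simplicial_complex d (cells X)"
  using X_multicomplex unfolding multicomplex_def by auto

lemma cell_subset_closed: "\<tau> \<in> cells X \<Longrightarrow> \<sigma> \<subseteq> \<tau> \<Longrightarrow> \<sigma> \<in> cells X"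
  using X_simplicial_complex unfolding simplicial_complex_def by blast

lemma finite_cell: "\<tau> \<in> cells X \<Longrightarrow> finite \<tau>"
  using X_simplicial_complex unfolding simplicial_complex_def by blast

lemma gstep_multicells:
  assumes "gstep X b a"
  shows "a \<in> multicells X \<and> b \<in> multicells X \<and> fst b \<subseteq> fst a \<and> card (fst b) + 1 = card (fst a)"
proof -
  from assms obtain \<sigma> where a: "a \<in> multicells X" and f: "face1 \<sigma> (fst a)" and b: "b = (\<sigma>, glue X a \<sigma>)"
    unfolding gstep_def by auto
  have "\<sigma> \<in> cells X" using a f cell_subset_closed unfolding face1_def multicells_def by auto
  moreover have "1 \<le> glue X a \<sigma> \<and> glue X a \<sigma> \<le> mult X \<sigma>"
    using X_multicomplex a f unfolding multicomplex_def by auto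
  ultimately have "b \<in> multicells X" using b unfolding multicells_def by auto
  thus ?thesis using a f b unfolding face1_def by auto
qed

lemma contained_multicells:
  assumes "contained X b a" "a \<in> multicells X"
  shows "b \<in> multicells X \<and> fst b \<subseteq> fst a \<and> card (fst b) \<le> card (fst a) \<and>
    (card (fst b) = card (fst a) \<longrightarrow> b = a)"
  using assms(1)[unfolded contained_def] assms(2)
proof (induction rule: converse_rtranclp_induct)
  case base
  then show ?case by auto
next
  case (step y z)
  from gstep_multicells[OF step(1)] step(3,4) show ?case by auto
qed

lemma contained_trans: "contained X a b \<Longrightarrow> contained X b c \<Longrightarrow> contained X a c"
  unfolding contained_def by auto

lemma gstep_imp_contained: "gstep X b a \<Longrightarrow> contained X b a"
  unfolding contained_def by auto

lemma ex_contained_face: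
  assumes "a \<in> multicells X" "\<sigma> \<subseteq> fst a"
  shows "\<exists>s. contained X (\<sigma>, s) a"
proof -
  obtain n where "card (fst a - \<sigma>) = n" by blast
  then show ?thesis using assms
  proof (induction n arbitrary: a)
    case 0
    have "finite (fst a)" using 0 finite_cell unfolding multicells_def by auto
    hence "(\<sigma>, snd a) = a" using 0 by auto
    thus ?case unfolding contained_def by (metis rtranclp.rtrancl_refl)
  next
    case (Suc n)
    have fa: "finite (fst a)" using Suc finite_cell unfolding multicells_def by auto
    obtain v where v: "v \<in> fst a - \<sigma>" using Suc.prems(1) by (metis card.empty ex_in_conv nat.distinct(1))
    let ?a' = "(fst a - {v}, glue X a (fst a - {v}))"
    have "card (fst a) > 0" using v fa card_gt_0_iff by blast
    hence "face1 (fst a - {v}) (fst a)" using v fa unfolding face1_def by (simp add: card_Diff_singleton)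
    hence g: "gstep X ?a' a" using Suc.prems(2) unfolding gstep_def by auto
    have "fst a - \<sigma> = insert v (fst ?a' - \<sigma>)" "v \<notin> fst ?a' - \<sigma>" using v by auto
    hence "card (fst ?a' - \<sigma>) = n" using Suc.prems(1) fa by (simp add: card_insert_disjoint)
    moreover have "\<sigma> \<subseteq> fst ?a'" using Suc.prems(3) v by auto
    ultimately obtain s where "contained X (\<sigma>, s) ?a'" using Suc.IH gstep_multicells[OF g] by blast
    thus ?case using contained_trans gstep_imp_contained[OF g] by blast
  qed
qed

lemma contained_through_facet:
  assumes "contained X b a" "b \<noteq> a"
  shows "\<exists>\<tau>. face1 \<tau> (fst a) \<and> a \<in> multicells X \<and> contained X b (\<tau>, glue X a \<tau>)"
proof -
  from assms(1)[unfolded contained_def] assms(2) obtain y where "(gstep X)\<^sup>*\<^sup>* b y" "gstep X y a"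
    by (metis rtranclp.cases)
  thus ?thesis unfolding gstep_def contained_def by auto
qed

lemma glue_consistent:
  assumes "s1 \<in> multicells X" "s2 \<in> multicells X" "c \<in> multicells X"
    "card (fst s1) = card (fst s2)" "contained X s1 c" "contained X s2 c"
    "face1 (fst s1 \<inter> fst s2) (fst s1)" "face1 (fst s1 \<inter> fst s2) (fst s2)"
  shows "glue X s1 (fst s1 \<inter> fst s2) = glue X s2 (fst s1 \<inter> fst s2)"
  using X_multicomplex assms unfolding multicomplex_def by blast

text \<open>The consistency axiom is exactly what makes two facets of a multicell agree on their
  common ridge, hence on every common face.\<close>

lemma facets_common_face:
  assumes g1: "gstep X c1 a" and g2: "gstep X c2 a" and \<sigma>: "\<sigma> \<subseteq> fst c1 \<inter> fst c2"
  shows "\<exists>t. contained X (\<sigma>, t) c1 \<and> contained X (\<sigma>, t) c2"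
proof (cases "fst c1 = fst c2")
  case True
  hence "c1 = c2" using g1 g2 unfolding gstep_def by auto
  thus ?thesis using ex_contained_face gstep_multicells[OF g1] \<sigma> by blast
next
  case False
  let ?\<rho> = "fst c1 \<inter> fst c2"
  have am: "a \<in> multicells X" and c1m: "c1 \<in> multicells X" and c2m: "c2 \<in> multicells X"
    using gstep_multicells g1 g2 by auto
  have "face1 (fst c1) (fst a)" "face1 (fst c2) (fst a)"
    using g1 g2 unfolding gstep_def by auto
  moreover have "finite (fst a)" using am finite_cell unfolding multicells_def by auto
  ultimately have ff: "face1 ?\<rho> (fst c1)" "face1 ?\<rho> (fst c2)" using face1_Int False by blast+
  have "card (fst c1) = card (fst c2)" using gstep_multicells[OF g1] gstep_multicells[OF g2] by simp
  from glue_consistent[OF c1m c2m am this gstep_imp_contained[OF g1] gstep_imp_contained[OF g2] ff]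
  have "glue X c1 ?\<rho> = glue X c2 ?\<rho>" .
  hence ge: "gstep X (?\<rho>, glue X c1 ?\<rho>) c1" "gstep X (?\<rho>, glue X c1 ?\<rho>) c2"
    using c1m c2m ff unfolding gstep_def by auto
  then obtain t where "contained X (\<sigma>, t) (?\<rho>, glue X c1 ?\<rho>)"
    using ex_contained_face gstep_multicells \<sigma> by (metis fst_conv)
  thus ?thesis using ge contained_trans gstep_imp_contained by blast
qed

lemma contained_index_unique:
  assumes "a \<in> multicells X" "contained X (\<sigma>, s) a" "contained X (\<sigma>, s') a"
  shows "s = s'"
proof -
  obtain n where "card (fst a) = card \<sigma> + n"
    using contained_multicells[OF assms(2,1)] le_Suc_ex by fastforce
  then show ?thesis using assms
  proof (induction n arbitrary: a s s')
    case 0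
    then show ?case using contained_multicells[OF 0(3,2)] contained_multicells[OF 0(4,2)] by auto
  next
    case (Suc m)
    have ne: "(\<sigma>, s) \<noteq> a" "(\<sigma>, s') \<noteq> a" using Suc.prems(1) by auto
    obtain \<tau>1 where t1: "face1 \<tau>1 (fst a)" "contained X (\<sigma>, s) (\<tau>1, glue X a \<tau>1)"
      using contained_through_facet[OF Suc.prems(3) ne(1)] by blast
    obtain \<tau>2 where t2: "face1 \<tau>2 (fst a)" "contained X (\<sigma>, s') (\<tau>2, glue X a \<tau>2)"
      using contained_through_facet[OF Suc.prems(4) ne(2)] by blast
    define c1 where "c1 = (\<tau>1, glue X a \<tau>1)"
    define c2 where "c2 = (\<tau>2, glue X a \<tau>2)"
    have g: "gstep X c1 a" "gstep X c2 a"
      using t1 t2 Suc.prems(2) unfolding c1_def c2_def gstep_def by auto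
    have cm: "c1 \<in> multicells X" "c2 \<in> multicells X" using gstep_multicells g by auto
    have cc: "card (fst c1) = card \<sigma> + m" "card (fst c2) = card \<sigma> + m"
      using t1 t2 Suc.prems(1) unfolding c1_def c2_def face1_def by auto
    have "\<sigma> \<subseteq> fst c1 \<inter> fst c2"
      using contained_multicells[OF t1(2)] contained_multicells[OF t2(2)] cm
      unfolding c1_def c2_def by auto
    then obtain t where t: "contained X (\<sigma>, t) c1" "contained X (\<sigma>, t) c2"
      using facets_common_face[OF g] by blast
    have "s = t" using Suc.IH[OF cc(1) cm(1)] t1(2) t(1) unfolding c1_def by blast
    moreover have "s' = t" using Suc.IH[OF cc(2) cm(2)] t2(2) t(2) unfolding c2_def by blast
    ultimately show ?case by simp
  qed
qed

definition face :: "mcell \<Rightarrow> nat set \<Rightarrow> mcell" where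
  "face a \<sigma> = (\<sigma>, THE s. contained X (\<sigma>, s) a)"

lemma ex1_face: "a \<in> multicells X \<Longrightarrow> \<sigma> \<subseteq> fst a \<Longrightarrow> \<exists>!s. contained X (\<sigma>, s) a"
  using ex_contained_face contained_index_unique by blast

lemma contained_face: "a \<in> multicells X \<Longrightarrow> \<sigma> \<subseteq> fst a \<Longrightarrow> contained X (face a \<sigma>) a"
  unfolding face_def by (rule theI'[OF ex1_face])

lemma face_eq: assumes "a \<in> multicells X" "contained X b a" shows "face a (fst b) = b"
proof -
  obtain \<sigma> s where b: "b = (\<sigma>, s)" by fastforce
  have "(THE s. contained X (\<sigma>, s) a) = s"
    by (rule the_equality) (use assms b contained_index_unique in auto)
  thus ?thesis unfolding face_def b by simp
qed

lemma fst_face[simp]: "fst (face a \<sigma>) = \<sigma>" unfolding face_def by auto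

lemma face_facet:
  assumes "a \<in> multicells X" "face1 \<sigma> (fst a)" shows "face a \<sigma> = (\<sigma>, glue X a \<sigma>)"
proof -
  have "contained X (\<sigma>, glue X a \<sigma>) a" using assms unfolding contained_def gstep_def by auto
  from face_eq[OF assms(1) this] show ?thesis by simp
qed

lemma face_of_contained: assumes "a \<in> multicells X" "contained X b a" "\<sigma> \<subseteq> fst b"
  shows "face b \<sigma> = face a \<sigma>"
proof -
  have "b \<in> multicells X" using contained_multicells assms by blast
  hence "contained X (face b \<sigma>) a" using contained_trans contained_face assms(2,3) by blast
  from face_eq[OF assms(1) this] show ?thesis by simp
qed

end

section \<open>Colourings, panels and rotations\<close>

locale colored_multicomplex = d_multicomplex +
  fixes \<gamma> :: "nat \<Rightarrow> nat"
  assumes X_coloring: "coloring d X \<gamma>"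
begin

abbreviation chambers :: "mcell set" where "chambers \<equiv> mcells_card X (d + 1)"

lemma chamber_multicell: "c \<in> chambers \<Longrightarrow> c \<in> multicells X \<and> card (fst c) = d + 1 \<and> fst c \<in> cells X"
  unfolding mcells_card_def multicells_def by auto

lemma color_le: "v \<in> \<tau> \<Longrightarrow> \<tau> \<in> cells X \<Longrightarrow> \<gamma> v \<le> d"
  using X_coloring cell_subset_closed[of \<tau> "{v}"] unfolding coloring_def by simp

lemma inj_on_color_chamber: "c \<in> chambers \<Longrightarrow> inj_on \<gamma> (fst c)"
  using X_coloring chamber_multicell unfolding coloring_def by blast

lemma color_chamber: assumes "c \<in> chambers" shows "\<gamma> ` fst c = {..d}"
proof -
  have "\<gamma> ` fst c \<subseteq> {..d}" using color_le chamber_multicell[OF assms] by auto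
  moreover have "card (\<gamma> ` fst c) = card {..d}"
    using card_image[OF inj_on_color_chamber[OF assms]] chamber_multicell[OF assms] by simp
  ultimately show ?thesis using card_subset_eq[of "{..d}"] by simp
qed

definition colored :: "mcell \<Rightarrow> nat set \<Rightarrow> nat set" where
  "colored c T = {v \<in> fst c. \<gamma> v \<in> T}"

lemma colored_subset: "colored c T \<subseteq> fst c" unfolding colored_def by auto

lemma color_colored: assumes "c \<in> chambers" shows "\<gamma> ` colored c T = T \<inter> {..d}"
proof -
  have "\<gamma> ` colored c T = \<gamma> ` fst c \<inter> T" unfolding colored_def by auto
  thus ?thesis using color_chamber[OF assms] by auto
qed

lemma card_colored: assumes "c \<in> chambers" shows "card (colored c T) = card (T \<inter> {..d})"
proof -
  have "inj_on \<gamma> (colored c T)" using inj_on_color_chamber[OF assms] colored_subset inj_on_subset by blast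
  hence "card (\<gamma> ` colored c T) = card (colored c T)" by (rule card_image)
  thus ?thesis using color_colored[OF assms] by simp
qed

lemma colored_color: assumes "c \<in> chambers" "\<sigma> \<subseteq> fst c" shows "colored c (\<gamma> ` \<sigma>) = \<sigma>"
proof
  show "\<sigma> \<subseteq> colored c (\<gamma> ` \<sigma>)" using assms unfolding colored_def by auto
  show "colored c (\<gamma> ` \<sigma>) \<subseteq> \<sigma>"
  proof
    fix v assume "v \<in> colored c (\<gamma> ` \<sigma>)"
    then obtain u where u: "u \<in> \<sigma>" "\<gamma> v = \<gamma> u" "v \<in> fst c" unfolding colored_def by auto
    hence "v = u" using inj_on_color_chamber[OF assms(1)] assms(2) unfolding inj_on_def by blast
    thus "v \<in> \<sigma>" using u by simp
  qed
qed

lemma face1_colored: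
  assumes c: "c \<in> chambers" and T: "T \<subseteq> {..d}" and i: "i \<in> T"
  shows "face1 (colored c (T - {i})) (colored c T)"
proof -
  have fin: "finite (colored c T)"
    by (rule finite_subset[OF colored_subset]) (use chamber_multicell[OF c] finite_cell in blast)
  have "finite T" using T finite_subset by blast
  moreover have "card T > 0" using i \<open>finite T\<close> card_gt_0_iff by blast
  ultimately have "card (T - {i}) + 1 = card T" using i by (simp add: card_Diff_singleton)
  moreover have "T \<inter> {..d} = T" "(T - {i}) \<inter> {..d} = T - {i}" using T by auto
  hence "card (colored c T) = card T" "card (colored c (T - {i})) = card (T - {i})"
    using card_colored[OF c] by simp_all
  moreover have "colored c (T - {i}) \<subseteq> colored c T" unfolding colored_def by blast
  ultimately show ?thesis using fin unfolding face1_def by simp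
qed

definition chamber_vertex :: "mcell \<Rightarrow> nat \<Rightarrow> nat" where
  "chamber_vertex c i = (THE v. v \<in> colored c {i})"

lemma colored_singleton: assumes c: "c \<in> chambers" and i: "i \<le> d"
  shows "colored c {i} = {chamber_vertex c i}"
proof -
  have "card (colored c {i}) = 1" using card_colored[OF c] i by simp
  then obtain v where v: "colored c {i} = {v}" using card_1_singletonE by blast
  hence "chamber_vertex c i = v" unfolding chamber_vertex_def by simp
  thus ?thesis using v by simp
qed

lemma colored_eq_image: assumes c: "c \<in> chambers" and T: "T \<subseteq> {..d}"
  shows "colored c T = chamber_vertex c ` T"
proof
  show "colored c T \<subseteq> chamber_vertex c ` T"
  proof
    fix v assume v: "v \<in> colored c T"
    hence vT: "\<gamma> v \<in> T" unfolding colored_def by simp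
    hence "v \<in> colored c {\<gamma> v}" using v unfolding colored_def by simp
    hence "v = chamber_vertex c (\<gamma> v)" using colored_singleton[OF c] T vT by blast
    thus "v \<in> chamber_vertex c ` T" using vT by blast
  qed
  show "chamber_vertex c ` T \<subseteq> colored c T"
  proof
    fix v assume "v \<in> chamber_vertex c ` T"
    then obtain i where i: "i \<in> T" "v = chamber_vertex c i" by blast
    hence "v \<in> colored c {i}" using colored_singleton[OF c] T by auto
    thus "v \<in> colored c T" using i unfolding colored_def by simp
  qed
qed

definition colored_face :: "mcell \<Rightarrow> nat set \<Rightarrow> mcell" where
  "colored_face c T = face c (colored c T)"

definition panel :: "nat \<Rightarrow> mcell \<Rightarrow> mcell" where
  "panel i c = colored_face c ({..d} - {i})"

lemma fst_colored_face[simp]: "fst (colored_face c T) = colored c T"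
  unfolding colored_face_def by simp

lemma contained_colored_face: "c \<in> chambers \<Longrightarrow> contained X (colored_face c T) c"
  unfolding colored_face_def using contained_face chamber_multicell colored_subset by blast

lemma colored_face_multicell: "c \<in> chambers \<Longrightarrow> colored_face c T \<in> multicells X"
  using contained_colored_face contained_multicells chamber_multicell by blast

lemma colored_face_all: assumes "c \<in> chambers" shows "colored_face c {..d} = c"
proof -
  have "colored c {..d} = fst c" using color_chamber[OF assms] unfolding colored_def by auto
  moreover have "contained X c c" unfolding contained_def by simp
  ultimately show ?thesis using face_eq[of c c] chamber_multicell[OF assms] unfolding colored_face_def by simp
qed

lemma panel_mcells_card: assumes "c \<in> chambers" "i \<le> d" shows "panel i c \<in> mcells_card X d"
proof -
  have "card (fst (panel i c)) = d"
    unfolding panel_def fst_colored_face card_colored[OF assms(1)] using assms(2) by (simp add: Int_absorb2)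
  thus ?thesis using colored_face_multicell[OF assms(1)] unfolding panel_def mcells_card_def by simp
qed

lemma contained_panel: "c \<in> chambers \<Longrightarrow> contained X (panel i c) c"
  unfolding panel_def by (rule contained_colored_face)

lemma panel_eq:
  assumes c: "c \<in> chambers" and b: "b \<in> mcells_card X d" and cb: "contained X b c"
    and g: "\<gamma> ` fst b = {..d} - {i}" and i: "i \<le> d"
  shows "b = panel i c"
proof -
  have bs: "fst b \<subseteq> fst c" using contained_multicells[OF cb] chamber_multicell[OF c] by blast
  have s: "fst b \<subseteq> colored c ({..d} - {i})" using bs g unfolding colored_def by auto
  have "card (colored c ({..d} - {i})) = d" using card_colored[OF c] i by (simp add: Int_absorb2)
  moreover have "card (fst b) = d" using b unfolding mcells_card_def by simp
  moreover have "finite (colored c ({..d} - {i}))"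
    by (rule finite_subset[OF colored_subset]) (use chamber_multicell[OF c] finite_cell in blast)
  ultimately have e: "fst b = colored c ({..d} - {i})" using card_subset_eq s by metis
  have "face c (fst b) = b" using face_eq cb chamber_multicell[OF c] by blast
  thus ?thesis using e unfolding panel_def colored_face_def by simp
qed

lemma panel_color:
  assumes c: "c \<in> chambers" and b: "b \<in> mcells_card X d" and cb: "contained X b c"
  shows "\<exists>i\<le>d. \<gamma> ` fst b = {..d} - {i}"
proof -
  have bs: "fst b \<subseteq> fst c" using contained_multicells[OF cb] chamber_multicell[OF c] by blast
  have cbd: "card (fst b) = d" using b unfolding mcells_card_def by simp
  moreover have "card (fst c) = d + 1" using chamber_multicell[OF c] by blast
  ultimately have "fst b \<noteq> fst c" by auto
  then obtain u where u: "u \<in> fst c" "u \<notin> fst b" using bs by blast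
  have inj: "inj_on \<gamma> (fst c)" by (rule inj_on_color_chamber[OF c])
  have gu: "\<gamma> u \<le> d" using color_chamber[OF c] u by auto
  have "\<gamma> ` fst b \<subseteq> {..d} - {\<gamma> u}"
  proof
    fix x assume "x \<in> \<gamma> ` fst b"
    then obtain v where v: "v \<in> fst b" "x = \<gamma> v" by blast
    have "x \<le> d" using v color_chamber[OF c] bs by auto
    moreover have "x \<noteq> \<gamma> u" using inj v bs u unfolding inj_on_def by blast
    ultimately show "x \<in> {..d} - {\<gamma> u}" by auto
  qed
  moreover have "card (\<gamma> ` fst b) = d" using card_image[OF inj_on_subset[OF inj bs]] cbd by simp
  moreover have "card ({..d} - {\<gamma> u}) = d" using gu by (simp add: card_Diff_singleton)
  ultimately have "\<gamma> ` fst b = {..d} - {\<gamma> u}" using card_subset_eq by (metis finite_Diff finite_atMost)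
  thus ?thesis using gu by blast
qed

end

locale ck_object = colored_multicomplex d X \<gamma>
  for d :: nat and X :: mcomplex and \<gamma> :: "nat \<Rightarrow> nat" +
  fixes k :: nat and \<omega> :: "mcell \<Rightarrow> nat \<Rightarrow> mcell \<Rightarrow> mcell" and a0 :: mcell
  assumes X_obj: "obj d k X \<gamma> \<omega> a0"
begin

lemma X_pure: "pure d X" and X_lower_path_connected: "lower_path_connected d X"
  and X_k_ordering: "k_ordering d k X \<omega>" and root_chamber: "a0 \<in> chambers"
  using X_obj unfolding obj_def by auto

definition rotate :: "nat \<Rightarrow> nat \<Rightarrow> mcell \<Rightarrow> mcell" where
  "rotate i l c = \<omega> (panel i c) l c"

lemma k_ordering_at: assumes "b \<in> mcells_card X d"
  shows "(\<forall>l<k. bij_betw (\<omega> b l) (delta d X b) (delta d X b)) \<and>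
        (\<forall>x\<in>delta d X b. \<omega> b 0 x = x) \<and>
        (\<forall>l<k. \<forall>l'<k. \<forall>x\<in>delta d X b. \<omega> b ((l + l') mod k) x = \<omega> b l (\<omega> b l' x)) \<and>
        (\<forall>x\<in>delta d X b. \<forall>y\<in>delta d X b. \<exists>l<k. \<omega> b l x = y)"
  using X_k_ordering assms unfolding k_ordering_def by blast

lemma chamber_in_delta_panel: "c \<in> chambers \<Longrightarrow> c \<in> delta d X (panel i c)"
  unfolding delta_def using contained_panel by blast

lemma
  assumes c: "c \<in> chambers" and i: "i \<le> d" and l: "l < k"
  shows rotate_chamber: "rotate i l c \<in> chambers"
    and panel_rotate: "panel i (rotate i l c) = panel i c"
proof -
  let ?b = "panel i c"
  have b: "?b \<in> mcells_card X d" using panel_mcells_card[OF c i] .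
  have "rotate i l c \<in> delta d X ?b"
    using k_ordering_at[OF b] l chamber_in_delta_panel[OF c] unfolding rotate_def bij_betw_def by blast
  thus a: "rotate i l c \<in> chambers" unfolding delta_def by blast
  have "\<gamma> ` fst ?b = {..d} - {i}" unfolding panel_def fst_colored_face color_colored[OF c] by auto
  with panel_eq[OF a b _ this i] \<open>rotate i l c \<in> delta d X ?b\<close>
  show "panel i (rotate i l c) = panel i c" unfolding delta_def by simp
qed

text \<open>Rotating about the panel missing colour \<open>i\<close> fixes every face avoiding colour \<open>i\<close>, since
  all of them lie in that panel.\<close>

lemma rotate_colored_face:
  assumes c: "c \<in> chambers" and i: "i \<le> d" and l: "l < k" and T: "i \<notin> T"
  shows "colored_face (rotate i l c) T = colored_face c T"
proof -
  let ?c' = "rotate i l c"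
  have c': "?c' \<in> chambers" and pe: "panel i ?c' = panel i c"
    using rotate_chamber[OF assms(1-3)] panel_rotate[OF assms(1-3)] .
  have in_panel: "colored x T = {v \<in> colored x ({..d} - {i}). \<gamma> v \<in> T}" if "x \<in> chambers" for x
    using color_le[of _ "fst x"] chamber_multicell[OF that] T unfolding colored_def by auto
  have "colored ?c' ({..d} - {i}) = colored c ({..d} - {i})"
    using arg_cong[OF pe, of fst] unfolding panel_def fst_colored_face .
  hence v: "colored ?c' T = colored c T" using in_panel[OF c'] in_panel[OF c] by simp
  have sub: "colored c T \<subseteq> fst (panel i c)"
    unfolding panel_def fst_colored_face using in_panel[OF c] by blast
  have "colored_face c T = face (panel i c) (colored c T)"
    unfolding colored_face_def using face_of_contained[OF _ contained_panel[OF c] sub] chamber_multicell[OF c]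
    by simp
  moreover have "colored_face ?c' T = face (panel i ?c') (colored ?c' T)"
    unfolding colored_face_def using face_of_contained[OF _ contained_panel[OF c', where i=i], of "colored ?c' T"]
      chamber_multicell[OF c'] sub pe v
    by simp
  ultimately show ?thesis using v pe by simp
qed

lemma rotate_0: "c \<in> chambers \<Longrightarrow> i \<le> d \<Longrightarrow> rotate i 0 c = c"
  using k_ordering_at[OF panel_mcells_card] chamber_in_delta_panel unfolding rotate_def by blast

lemma rotate_add: assumes c: "c \<in> chambers" and i: "i \<le> d" and l: "l < k" and l': "l' < k"
  shows "rotate i ((l + l') mod k) c = rotate i l (rotate i l' c)"
proof -
  have "\<omega> (panel i c) ((l + l') mod k) c = \<omega> (panel i c) l (\<omega> (panel i c) l' c)"
    using k_ordering_at[OF panel_mcells_card[OF c i]] l l' chamber_in_delta_panel[OF c] by blast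
  thus ?thesis using panel_rotate[OF c i l', unfolded rotate_def] unfolding rotate_def by simp
qed

lemma neighbors_rotate:
  assumes "neighbors d X c c'" shows "\<exists>i\<le>d. \<exists>l<k. c' = rotate i l c"
proof -
  from assms obtain b where c: "c \<in> chambers" and c': "c' \<in> chambers" and b: "b \<in> mcells_card X d"
    and cb: "contained X b c" and cb': "contained X b c'" unfolding neighbors_def by blast
  obtain i where i: "i \<le> d" "\<gamma> ` fst b = {..d} - {i}" using panel_color[OF c b cb] by blast
  have "b = panel i c" using panel_eq[OF c b cb i(2) i(1)] .
  moreover obtain l where "l < k" "\<omega> b l c = c'"
    using k_ordering_at[OF b] c c' cb cb' unfolding delta_def by blast
  ultimately show ?thesis using i unfolding rotate_def by blast
qed

end

section \<open>The multicomplex of a chamber system\<close>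

lemma mod_complement_add: "l < (k::nat) \<Longrightarrow> ((k - l) mod k + l) mod k = 0"
  by (simp add: mod_add_left_eq)

lemma mod_complement_complement: "l < (k::nat) \<Longrightarrow> (k - (k - l) mod k) mod k = l"
  by (cases "l = 0") simp_all

locale chamber_system =
  fixes d k :: nat and P :: "'c set" and rot :: "nat \<Rightarrow> nat \<Rightarrow> 'c \<Rightarrow> 'c" and c0 :: 'c
  assumes k_pos: "1 \<le> k" and finite_P: "finite P" and base_in_P: "c0 \<in> P"
    and rot_in_P: "\<And>i l x. i \<le> d \<Longrightarrow> l < k \<Longrightarrow> x \<in> P \<Longrightarrow> rot i l x \<in> P"
    and rot_0: "\<And>i x. i \<le> d \<Longrightarrow> x \<in> P \<Longrightarrow> rot i 0 x = x"
    and rot_add: "\<And>i l l' x. i \<le> d \<Longrightarrow> l < k \<Longrightarrow> l' < k \<Longrightarrow> x \<in> P \<Longrightarrow>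
               rot i ((l + l') mod k) x = rot i l (rot i l' x)"
    and generated: "\<And>x. x \<in> P \<Longrightarrow> (\<lambda>x y. \<exists>i\<in>{..d}. \<exists>l<k. y = rot i l x)\<^sup>*\<^sup>* c0 x"
begin

definition rot_step :: "nat set \<Rightarrow> 'c \<Rightarrow> 'c \<Rightarrow> bool" where
  "rot_step J x y \<longleftrightarrow> (\<exists>i\<in>J. \<exists>l<k. y = rot i l x)"

definition residue_rel :: "nat set \<Rightarrow> 'c \<Rightarrow> 'c \<Rightarrow> bool" where
  "residue_rel J = (rot_step J)\<^sup>*\<^sup>*"

definition residue :: "nat set \<Rightarrow> 'c \<Rightarrow> 'c set" where
  "residue J c = {y. residue_rel J c y}"

lemma rot_inverse: assumes "i \<le> d" "l < k" "x \<in> P" shows "rot i ((k - l) mod k) (rot i l x) = x"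
proof -
  have m: "(k - l) mod k < k" using assms(2) by simp
  have "((k - l) mod k + l) mod k = 0" using mod_complement_add[OF assms(2)] .
  hence "rot i 0 x = rot i ((k - l) mod k) (rot i l x)" using rot_add[OF assms(1) m assms(2,3)] by simp
  thus ?thesis using rot_0[OF assms(1,3)] by simp
qed

lemma rot_step_in_P: "J \<subseteq> {..d} \<Longrightarrow> x \<in> P \<Longrightarrow> rot_step J x y \<Longrightarrow> y \<in> P"
  unfolding rot_step_def using rot_in_P by blast

lemma residue_rel_in_P: assumes "J \<subseteq> {..d}" "residue_rel J x y" "x \<in> P" shows "y \<in> P"
  using assms(2)[unfolded residue_rel_def] assms(3)
  by (induction rule: rtranclp_induct) (use rot_step_in_P[OF assms(1)] in blast)+

lemma rot_step_sym: assumes "J \<subseteq> {..d}" "x \<in> P" "rot_step J x y" shows "rot_step J y x"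
proof -
  obtain i l where il: "i \<in> J" "l < k" "y = rot i l x" using assms(3) unfolding rot_step_def by blast
  have "i \<le> d" using il assms(1) by auto
  hence "x = rot i ((k - l) mod k) y" using rot_inverse il assms(2) by simp
  moreover have "(k - l) mod k < k" using il by simp
  ultimately show ?thesis using il unfolding rot_step_def by blast
qed

lemma residue_rel_trans: "residue_rel J x y \<Longrightarrow> residue_rel J y z \<Longrightarrow> residue_rel J x z"
  unfolding residue_rel_def by simp

lemma residue_rel_refl[simp]: "residue_rel J x x" unfolding residue_rel_def by simp

lemma residue_rel_sym: assumes "J \<subseteq> {..d}" "residue_rel J x y" "x \<in> P" shows "residue_rel J y x"
  using assms(2)[unfolded residue_rel_def] assms(3)
proof (induction rule: rtranclp_induct)
  case base then show ?case by simp
next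
  case (step y z)
  have yP: "y \<in> P" using residue_rel_in_P[OF assms(1)] step(1,4) unfolding residue_rel_def by blast
  have "rot_step J z y" using rot_step_sym[OF assms(1) yP step(2)] .
  hence "residue_rel J z y" unfolding residue_rel_def by simp
  thus ?case using step(3,4) residue_rel_trans by blast
qed

lemma rot_step_mono: "J \<subseteq> J' \<Longrightarrow> rot_step J x y \<Longrightarrow> rot_step J' x y" unfolding rot_step_def by blast

lemma residue_rel_mono: assumes "J \<subseteq> J'" "residue_rel J x y" shows "residue_rel J' x y"
proof -
  have "(rot_step J)\<^sup>*\<^sup>* x y" using assms(2) unfolding residue_rel_def .
  hence "(rot_step J')\<^sup>*\<^sup>* x y" by (rule rtranclp_mono[THEN predicate2D, rotated]) (use rot_step_mono[OF assms(1)] in blast)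
  thus ?thesis unfolding residue_rel_def .
qed

lemma residue_rel_empty: "residue_rel {} x y \<Longrightarrow> x = y"
proof -
  assume "residue_rel {} x y"
  hence "(rot_step {})\<^sup>*\<^sup>* x y" unfolding residue_rel_def .
  thus ?thesis by (induction rule: rtranclp_induct) (auto simp: rot_step_def)
qed

lemma rot_residue_rel: "i \<in> J \<Longrightarrow> l < k \<Longrightarrow> residue_rel J x (rot i l x)"
  unfolding residue_rel_def rot_step_def by (intro r_into_rtranclp) blast

lemma residue_eq: assumes "J \<subseteq> {..d}" "x \<in> P" "residue_rel J x y" shows "residue J y = residue J x"
  unfolding residue_def using residue_rel_sym[OF assms(1,3,2)] assms residue_rel_trans by blast

lemma residue_subset: "J \<subseteq> {..d} \<Longrightarrow> x \<in> P \<Longrightarrow> residue J x \<subseteq> P"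
  unfolding residue_def using residue_rel_in_P by blast

lemma residue_rel_all: assumes "x \<in> P" "y \<in> P" shows "residue_rel {..d} x y"
proof -
  have e: "rot_step {..d} = (\<lambda>x y. \<exists>i\<in>{..d}. \<exists>l<k. y = rot i l x)" unfolding rot_step_def by (intro ext) simp
  have "residue_rel {..d} c0 x" "residue_rel {..d} c0 y" unfolding residue_rel_def e using generated assms by auto
  thus ?thesis using residue_rel_sym base_in_P residue_rel_trans by blast
qed

lemma residue_rel_single: assumes "i \<le> d" "x \<in> P" "residue_rel {i} x y" shows "\<exists>l<k. y = rot i l x"
  using assms(3)[unfolded residue_rel_def]
proof (induction rule: rtranclp_induct)
  case base
  then show ?case using rot_0[OF assms(1,2)] k_pos by (metis less_le_trans zero_less_one)
next
  case (step y z)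
  then obtain l where l: "l < k" "y = rot i l x" by blast
  obtain l' where l': "l' < k" "z = rot i l' y" using step(2) unfolding rot_step_def by blast
  have "z = rot i ((l' + l) mod k) x" using rot_add[OF assms(1) l'(1) l(1) assms(2)] l l' by simp
  moreover have "(l' + l) mod k < k" using k_pos by simp
  ultimately show ?case by blast
qed

lemma residue_single_transitive:
  assumes i: "i \<le> d" and x: "x \<in> P" and y: "y \<in> residue {i} x" and y': "y' \<in> residue {i} x"
  shows "\<exists>l<k. y' = rot i l y"
proof -
  have "residue_rel {i} y x" using residue_rel_sym[of "{i}" x y] i x y unfolding residue_def by auto
  hence "residue_rel {i} y y'" using y' residue_rel_trans unfolding residue_def by blast
  moreover have "y \<in> P" using residue_rel_in_P[of "{i}" x y] i x y unfolding residue_def by auto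
  ultimately show ?thesis using residue_rel_single i by blast
qed

definition code :: "'c \<Rightarrow> nat" where "code = (SOME f. inj_on f P)"

lemma inj_on_code: "inj_on code P"
proof -
  obtain f :: "'c \<Rightarrow> nat" and n where "inj_on f P" using finite_imp_inj_to_nat_seg[OF finite_P] by blast
  thus ?thesis unfolding code_def by (rule someI[of "\<lambda>f. inj_on f P"])
qed

text \<open>The vertex of colour \<open>i\<close> of a chamber \<open>c\<close> is its \<open>({..d} - {i})\<close>-residue, encoded as a
  natural number by pairing \<open>i\<close> with the least code of an element of the residue.\<close>

definition vertex :: "nat \<Rightarrow> 'c \<Rightarrow> nat" where
  "vertex i c = prod_encode (i, Min (code ` residue ({..d} - {i}) c))"

definition vertex_color :: "nat \<Rightarrow> nat" where "vertex_color n = fst (prod_decode n)"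

lemma vertex_color_vertex[simp]: "vertex_color (vertex i c) = i" unfolding vertex_color_def vertex_def by simp

lemma vertex_eq: assumes "x \<in> P" "residue_rel ({..d} - {i}) x y" shows "vertex i x = vertex i y"
proof -
  have "residue ({..d} - {i}) y = residue ({..d} - {i}) x" by (rule residue_eq[OF _ assms(1,2)]) blast
  thus ?thesis unfolding vertex_def by simp
qed

lemma vertex_eqD: assumes x: "x \<in> P" and y: "y \<in> P" and eq: "vertex i x = vertex i' y"
  shows "i = i' \<and> residue_rel ({..d} - {i}) x y"
proof -
  have ii: "i = i'" using arg_cong[OF eq, of vertex_color] by simp
  let ?J = "{..d} - {i}"
  let ?R = "residue ?J x" and ?R' = "residue ?J y"
  have JD: "?J \<subseteq> {..d}" by blast
  have sR: "?R \<subseteq> P" "?R' \<subseteq> P" using residue_subset[OF JD x] residue_subset[OF JD y] .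
  have fR: "finite ?R" "finite ?R'" using sR finite_P finite_subset by auto
  have "x \<in> ?R" "y \<in> ?R'" unfolding residue_def by simp_all
  hence ne: "?R \<noteq> {}" "?R' \<noteq> {}" by blast+
  have m: "Min (code ` ?R) = Min (code ` ?R')" using eq ii unfolding vertex_def by simp
  have m1: "Min (code ` ?R) \<in> code ` ?R" using fR ne by (intro Min_in) auto
  have m2: "Min (code ` ?R') \<in> code ` ?R'" using fR ne by (intro Min_in) auto
  obtain u where u: "u \<in> ?R" "code u = Min (code ` ?R)" using m1 by force
  obtain u' where u': "u' \<in> ?R'" "code u' = Min (code ` ?R')" using m2 by force
  have "u \<in> P" "u' \<in> P" using u(1) u'(1) sR by blast+
  moreover have "code u = code u'" using u u' m by simp
  ultimately have "u = u'" using inj_on_code unfolding inj_on_def by blast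
  hence r1: "residue_rel ?J x u" and r2: "residue_rel ?J y u" using u u' unfolding residue_def by auto
  have "residue_rel ?J u y" by (rule residue_rel_sym[OF JD r2 y])
  hence "residue_rel ?J x y" using r1 residue_rel_trans by blast
  thus ?thesis using ii by simp
qed

definition cell_of :: "nat set \<Rightarrow> 'c \<Rightarrow> nat set" where
  "cell_of J c = (\<lambda>i. vertex i c) ` ({..d} - J)"

lemma vertex_color_cell_of: "vertex_color ` cell_of J c = {..d} - J"
  unfolding cell_of_def by (simp add: image_image)

definition cotype :: "nat set \<Rightarrow> nat set" where "cotype \<tau> = {..d} - vertex_color ` \<tau>"

lemma cotype_cell_of: "J \<subseteq> {..d} \<Longrightarrow> cotype (cell_of J c) = J"
  unfolding cotype_def vertex_color_cell_of by auto

lemma card_cell_of: "card (cell_of J c) = card ({..d} - J)"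
  unfolding cell_of_def
proof (rule card_image, rule inj_onI)
  fix x y assume "vertex x c = vertex y c"
  hence "vertex_color (vertex x c) = vertex_color (vertex y c)" by simp
  thus "x = y" by simp
qed

lemma finite_cell_of: "finite (cell_of J c)" unfolding cell_of_def by simp

lemma cell_of_eq: assumes "J \<subseteq> {..d}" "c \<in> P" "residue_rel J c c'" shows "cell_of J c = cell_of J c'"
proof -
  have "vertex i c = vertex i c'" if ii: "i \<in> {..d} - J" for i
  proof -
    have "J \<subseteq> {..d} - {i}" using ii assms(1) by blast
    from vertex_eq[OF assms(2) residue_rel_mono[OF this assms(3)]] show ?thesis .
  qed
  thus ?thesis unfolding cell_of_def by (intro image_cong) auto
qed

lemma cotype_subset: "cotype \<sigma> \<subseteq> {..d}"
  unfolding cotype_def by blast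

lemma cotype_antimono: "\<sigma> \<subseteq> \<tau> \<Longrightarrow> cotype \<tau> \<subseteq> cotype \<sigma>"
  unfolding cotype_def by blast

lemma subset_cell_of: assumes "\<sigma> \<subseteq> cell_of J c" shows "\<sigma> = cell_of (cotype \<sigma>) c"
proof -
  have "vertex_color ` \<sigma> \<subseteq> {..d}" using image_mono[OF assms, of vertex_color] unfolding vertex_color_cell_of by blast
  hence "{..d} - cotype \<sigma> = vertex_color ` \<sigma>" unfolding cotype_def by (simp add: double_diff)
  hence "cell_of (cotype \<sigma>) c = (\<lambda>n. vertex (vertex_color n) c) ` \<sigma>"
    unfolding cell_of_def by (simp add: image_image)
  also have "\<dots> = (\<lambda>n. n) ` \<sigma>"
  proof (rule image_cong)
    fix n assume "n \<in> \<sigma>"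
    then obtain i where "n = vertex i c" using assms unfolding cell_of_def by blast
    thus "vertex (vertex_color n) c = n" by simp
  qed simp
  finally show ?thesis by simp
qed

lemma cell_of_antimono: "J \<subseteq> J' \<Longrightarrow> cell_of J' c \<subseteq> cell_of J c"
  unfolding cell_of_def by auto

definition Y_cells :: "nat set set" where
  "Y_cells = {cell_of J c | J c. J \<subseteq> {..d} \<and> c \<in> P}"

text \<open>The multicells of \<open>Y\<close> over a cell \<open>\<tau>\<close> are the residues of cotype \<open>cotype \<tau>\<close> whose
  vertex set is \<open>\<tau>\<close>, numbered \<open>1..\<close> by \<open>enum \<tau>\<close>.\<close>

definition residues_over :: "nat set \<Rightarrow> 'c set set" where
  "residues_over \<tau> = {residue (cotype \<tau>) c | c. c \<in> P \<and> cell_of (cotype \<tau>) c = \<tau>}"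

lemma finite_residues_over: "finite (residues_over \<tau>)"
proof -
  have "cotype \<tau> \<subseteq> {..d}" unfolding cotype_def by blast
  hence "residue (cotype \<tau>) c \<subseteq> P" if "c \<in> P" for c using residue_subset that by blast
  hence "residues_over \<tau> \<subseteq> Pow P" unfolding residues_over_def by blast
  thus ?thesis using finite_P finite_subset by blast
qed

definition enum :: "nat set \<Rightarrow> nat \<Rightarrow> 'c set" where
  "enum \<tau> = (SOME f. bij_betw f {1..card (residues_over \<tau>)} (residues_over \<tau>))"

lemma bij_enum: "bij_betw (enum \<tau>) {1..card (residues_over \<tau>)} (residues_over \<tau>)"
  unfolding enum_def using ex_bij_betw_nat_finite_1[OF finite_residues_over] by (rule someI_ex)

definition index :: "nat set \<Rightarrow> 'c \<Rightarrow> nat" where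
  "index J c = inv_into {1..card (residues_over (cell_of J c))} (enum (cell_of J c)) (residue J c)"

definition mcell_of :: "nat set \<Rightarrow> 'c \<Rightarrow> mcell" where
  "mcell_of J c = (cell_of J c, index J c)"

definition representative :: "mcell \<Rightarrow> 'c" where
  "representative a = (SOME c. c \<in> enum (fst a) (snd a))"

definition Y_glue :: "mcell \<Rightarrow> nat set \<Rightarrow> nat" where
  "Y_glue a \<sigma> = index (cotype \<sigma>) (representative a)"

definition Y :: mcomplex where
  "Y = \<lparr>cells = Y_cells, mult = (\<lambda>\<tau>. card (residues_over \<tau>)), glue = Y_glue\<rparr>"

lemma Y_simps[simp]: "cells Y = Y_cells" "mult Y = (\<lambda>\<tau>. card (residues_over \<tau>))" "glue Y = Y_glue"
  unfolding Y_def by simp_all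

lemma fst_mcell_of[simp]: "fst (mcell_of J c) = cell_of J c" unfolding mcell_of_def by simp

lemma residue_in_residues_over: assumes "J \<subseteq> {..d}" "c \<in> P" shows "residue J c \<in> residues_over (cell_of J c)"
  unfolding residues_over_def cotype_cell_of[OF assms(1)] using assms(2) by blast

lemma mcell_of_multicell: assumes J: "J \<subseteq> {..d}" and c: "c \<in> P"
  shows "mcell_of J c \<in> multicells Y" "enum (cell_of J c) (index J c) = residue J c"
proof -
  let ?\<tau> = "cell_of J c"
  have r: "residue J c \<in> enum ?\<tau> ` {1..card (residues_over ?\<tau>)}" using residue_in_residues_over[OF assms] bij_enum unfolding bij_betw_def by auto
  have "index J c \<in> {1..card (residues_over ?\<tau>)}" unfolding index_def by (rule inv_into_into[OF r])
  moreover have "?\<tau> \<in> Y_cells" unfolding Y_cells_def using assms by blast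
  ultimately show "mcell_of J c \<in> multicells Y" unfolding multicells_def mcell_of_def by simp
  show "enum ?\<tau> (index J c) = residue J c" unfolding index_def by (rule f_inv_into_f[OF r])
qed

lemma ex_mcell_of: assumes "a \<in> multicells Y" shows "\<exists>J c. J \<subseteq> {..d} \<and> c \<in> P \<and> a = mcell_of J c"
proof -
  obtain \<tau> r where a: "a = (\<tau>, r)" "\<tau> \<in> Y_cells" "r \<in> {1..card (residues_over \<tau>)}"
    using assms unfolding multicells_def by auto
  obtain J0 x where tx: "\<tau> = cell_of J0 x" "J0 \<subseteq> {..d}" using a(2) unfolding Y_cells_def by blast
  have "enum \<tau> r \<in> residues_over \<tau>" using bij_enum a(3) unfolding bij_betw_def by blast
  then obtain c where c: "enum \<tau> r = residue (cotype \<tau>) c" "c \<in> P" "cell_of (cotype \<tau>) c = \<tau>" unfolding residues_over_def by blast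
  have cotype: "cotype \<tau> = J0" unfolding tx(1) cotype_cell_of[OF tx(2)] ..
  have "inv_into {1..card (residues_over \<tau>)} (enum \<tau>) (enum \<tau> r) = r"
    by (rule inv_into_f_f) (use bij_enum a(3) in \<open>auto simp: bij_betw_def\<close>)
  hence "index J0 c = r" unfolding index_def using c cotype by simp
  hence "a = mcell_of J0 c" unfolding mcell_of_def using a c cotype by simp
  thus ?thesis using tx c by blast
qed

lemma representative_rel: assumes "J \<subseteq> {..d}" "c \<in> P" shows "residue_rel J c (representative (mcell_of J c)) \<and> representative (mcell_of J c) \<in> P"
proof -
  have "c \<in> enum (fst (mcell_of J c)) (snd (mcell_of J c))" using mcell_of_multicell(2)[OF assms] unfolding mcell_of_def residue_def by simp
  hence "representative (mcell_of J c) \<in> enum (fst (mcell_of J c)) (snd (mcell_of J c))" unfolding representative_def by (rule someI)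
  hence "residue_rel J c (representative (mcell_of J c))" using mcell_of_multicell(2)[OF assms] unfolding mcell_of_def residue_def by simp
  thus ?thesis using residue_rel_in_P assms by blast
qed

lemma mcell_of_eq: assumes "J \<subseteq> {..d}" "c \<in> P" "residue_rel J c c'" shows "mcell_of J c = mcell_of J c'"
  unfolding mcell_of_def index_def using cell_of_eq[OF assms] residue_eq[OF assms] by simp

lemma mcell_of_eqD: assumes "J \<subseteq> {..d}" "J' \<subseteq> {..d}" "c \<in> P" "c' \<in> P" "mcell_of J c = mcell_of J' c'"
  shows "J = J' \<and> residue_rel J c c'"
proof -
  have "cell_of J c = cell_of J' c'" using assms(5) unfolding mcell_of_def by simp
  hence JJ: "J = J'" using cotype_cell_of assms(1,2) by metis
  have "enum (cell_of J c) (index J c) = enum (cell_of J' c') (index J' c')" using assms(5) unfolding mcell_of_def by simp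
  hence "residue J c = residue J c'" using mcell_of_multicell(2) assms JJ by metis
  hence "c' \<in> residue J c" unfolding residue_def by auto
  thus ?thesis using JJ unfolding residue_def by simp
qed

lemma Y_glue_mcell_of: assumes J: "J \<subseteq> {..d}" and c: "c \<in> P" and s: "\<sigma> \<subseteq> cell_of J c"
  shows "(\<sigma>, Y_glue (mcell_of J c) \<sigma>) = mcell_of (cotype \<sigma>) c"
proof -
  let ?J' = "cotype \<sigma>"
  have sc: "\<sigma> = cell_of ?J' c" by (rule subset_cell_of[OF s])
  have JJ: "J \<subseteq> ?J'" using cotype_antimono[OF s] cotype_cell_of[OF J] by simp
  have r: "residue_rel J c (representative (mcell_of J c))" using representative_rel[OF J c] by blast
  have "mcell_of ?J' c = mcell_of ?J' (representative (mcell_of J c))" 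
    by (rule mcell_of_eq) (use c residue_rel_mono[OF JJ r] cotype_subset in auto)
  thus ?thesis unfolding Y_glue_def mcell_of_def using sc by simp
qed

lemma face1_cell_of: assumes J: "J \<subseteq> {..d}" and f: "face1 \<sigma> (cell_of J c)"
  shows "\<exists>i. i \<in> {..d} - J \<and> \<sigma> = cell_of (insert i J) c"
proof -
  let ?J' = "cotype \<sigma>"
  have s: "\<sigma> \<subseteq> cell_of J c" using f unfolding face1_def by simp
  have sc: "\<sigma> = cell_of ?J' c" by (rule subset_cell_of[OF s])
  have JJ: "J \<subseteq> ?J'" "?J' \<subseteq> {..d}"
    using cotype_antimono[OF s] cotype_cell_of[OF J] cotype_subset by simp_all
  have "card \<sigma> + 1 = card (cell_of J c)" using f unfolding face1_def by simp
  hence cc: "card ({..d} - ?J') + 1 = card ({..d} - J)" using sc card_cell_of by metis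
  have sub: "{..d} - ?J' \<subseteq> {..d} - J" using JJ by blast
  have "card (({..d} - J) - ({..d} - ?J')) = card ({..d} - J) - card ({..d} - ?J')"
    by (rule card_Diff_subset) (use sub in auto)
  moreover have "({..d} - J) - ({..d} - ?J') = ?J' - J" using JJ by blast
  ultimately have "card (?J' - J) = 1" using cc by simp
  then obtain i where i: "?J' - J = {i}" using card_1_singletonE by blast
  hence "?J' = insert i J" using JJ by blast
  moreover have "i \<in> {..d} - J" using i JJ by blast
  ultimately show ?thesis using sc by metis
qed

lemma gstep_Y_mcell_of: assumes J: "J \<subseteq> {..d}" and c: "c \<in> P" and g: "gstep Y b (mcell_of J c)"
  shows "\<exists>J'. J \<subseteq> J' \<and> J' \<subseteq> {..d} \<and> b = mcell_of J' c"
proof -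
  obtain \<sigma> where f: "face1 \<sigma> (cell_of J c)" and b: "b = (\<sigma>, Y_glue (mcell_of J c) \<sigma>)"
    using g unfolding gstep_def by auto
  obtain i where i: "i \<in> {..d} - J" "\<sigma> = cell_of (insert i J) c" using face1_cell_of[OF J f] by blast
  have s: "\<sigma> \<subseteq> cell_of J c" using f unfolding face1_def by simp
  have ij: "insert i J \<subseteq> {..d}" using i J by blast
  have "b = mcell_of (cotype \<sigma>) c" using Y_glue_mcell_of[OF J c s] b by simp
  also have "cotype \<sigma> = insert i J" using i(2) cotype_cell_of[OF ij] by simp
  finally show ?thesis using ij by blast
qed

lemma card_colors_diff_insert:
  assumes "i \<in> {..d} - J" shows "card ({..d} - insert i J) + 1 = card ({..d} - J)"
proof -
  have "{..d} - insert i J = ({..d} - J) - {i}" by blast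
  moreover have "Suc (card (({..d} - J) - {i})) = card ({..d} - J)"
    by (rule card_Suc_Diff1) (use assms in auto)
  ultimately show ?thesis by simp
qed

lemma gstep_Y_insert: assumes J: "J \<subseteq> {..d}" and c: "c \<in> P" and i: "i \<in> {..d} - J"
  shows "gstep Y (mcell_of (insert i J) c) (mcell_of J c)"
proof -
  let ?\<sigma> = "cell_of (insert i J) c"
  have ij: "insert i J \<subseteq> {..d}" using i J by blast
  have s: "?\<sigma> \<subseteq> cell_of J c" by (rule cell_of_antimono) blast
  have f: "face1 ?\<sigma> (cell_of J c)" unfolding face1_def
    using finite_cell_of s card_colors_diff_insert[OF i] by (simp add: card_cell_of)
  have "(?\<sigma>, Y_glue (mcell_of J c) ?\<sigma>) = mcell_of (cotype ?\<sigma>) c" by (rule Y_glue_mcell_of[OF J c s])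
  also have "cotype ?\<sigma> = insert i J" using cotype_cell_of[OF ij] .
  finally have "mcell_of (insert i J) c = (?\<sigma>, Y_glue (mcell_of J c) ?\<sigma>)" by simp
  thus ?thesis unfolding gstep_def fst_mcell_of Y_simps(3) using mcell_of_multicell(1)[OF J c] f by blast
qed

lemma contained_mcell_of_mono:
  assumes "J \<subseteq> J'" "J' \<subseteq> {..d}" "c \<in> P"
  shows "contained Y (mcell_of J' c) (mcell_of J c)"
  using assms(1)
proof (induction "card (J' - J)" arbitrary: J)
  case 0
  have "finite (J' - J)" using assms(2) finite_subset by blast
  hence "J' = J" using 0 by auto
  thus ?case unfolding contained_def by simp
next
  case (Suc n)
  then obtain i where i: "i \<in> J' - J" by (metis card.empty ex_in_conv nat.distinct(1))
  have "finite (J' - J)" using assms(2) finite_subset by blast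
  moreover have "J' - insert i J = (J' - J) - {i}" by blast
  ultimately have "card (J' - insert i J) = n" using i Suc.hyps(2) by (simp add: card_Diff_singleton)
  hence "contained Y (mcell_of J' c) (mcell_of (insert i J) c)" using Suc.hyps(1) i Suc.prems by blast
  moreover have "gstep Y (mcell_of (insert i J) c) (mcell_of J c)"
    using gstep_Y_insert assms Suc.prems i by blast
  ultimately show ?case unfolding contained_def by simp
qed

lemma contained_Y_mcell_of: assumes J: "J \<subseteq> {..d}" and c: "c \<in> P"
  shows "contained Y b (mcell_of J c) \<longleftrightarrow> (\<exists>J'. J \<subseteq> J' \<and> J' \<subseteq> {..d} \<and> b = mcell_of J' c)"
proof
  assume "contained Y b (mcell_of J c)"
  hence "(gstep Y)\<^sup>*\<^sup>* b (mcell_of J c)" unfolding contained_def .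
  thus "\<exists>J'. J \<subseteq> J' \<and> J' \<subseteq> {..d} \<and> b = mcell_of J' c"
  proof (induction rule: converse_rtranclp_induct)
    case base
    then show ?case using J by blast
  next
    case (step y z)
    then obtain J' where J': "J \<subseteq> J'" "J' \<subseteq> {..d}" "z = mcell_of J' c" by blast
    obtain J'' where "J' \<subseteq> J''" "J'' \<subseteq> {..d}" "y = mcell_of J'' c"
      using gstep_Y_mcell_of[OF J'(2) c] step(1) J'(3) by blast
    thus ?case using J'(1) by blast
  qed
next
  assume "\<exists>J'. J \<subseteq> J' \<and> J' \<subseteq> {..d} \<and> b = mcell_of J' c"
  then obtain J' where "J \<subseteq> J'" "J' \<subseteq> {..d}" "b = mcell_of J' c" by blast
  thus "contained Y b (mcell_of J c)" using contained_mcell_of_mono c by blast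
qed

lemma mcell_of_mcells_card: assumes "J \<subseteq> {..d}" "c \<in> P"
  shows "mcell_of J c \<in> mcells_card Y n \<longleftrightarrow> card ({..d} - J) = n"
  unfolding mcells_card_def using mcell_of_multicell[OF assms] card_cell_of by simp

lemma full_cotype_empty: assumes "J \<subseteq> {..d}" "card ({..d} - J) = d + 1" shows "J = {}"
proof -
  have "{..d} - J = {..d}" by (rule card_subset_eq) (use assms in auto)
  thus ?thesis using assms(1) by blast
qed

lemma residue_all: assumes c: "c \<in> P" shows "residue {..d} c = P"
proof
  show "residue {..d} c \<subseteq> P" using residue_subset[OF _ c] by blast
  show "P \<subseteq> residue {..d} c" unfolding residue_def using residue_rel_all[OF c] by blast
qed

lemma Y_simplicial_complex: "simplicial_complex d Y_cells"
  unfolding simplicial_complex_def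
proof (intro conjI ballI allI impI)
  have "cell_of {..d} c0 = {}" unfolding cell_of_def by simp
  thus "{} \<in> Y_cells" unfolding Y_cells_def using base_in_P by blast
  fix \<tau> assume t: "\<tau> \<in> Y_cells"
  then obtain J x where Jx: "J \<subseteq> {..d}" "x \<in> P" "\<tau> = cell_of J x" unfolding Y_cells_def by blast
  show "finite \<tau>" using Jx finite_cell_of by simp
  have "card ({..d} - J) \<le> card {..d}" by (rule card_mono) auto
  thus "card \<tau> \<le> d + 1" using Jx(3) card_cell_of by simp
  fix \<sigma> assume "\<sigma> \<subseteq> \<tau>"
  hence "\<sigma> = cell_of (cotype \<sigma>) x" using subset_cell_of[of \<sigma> J x] Jx(3) by simp
  thus "\<sigma> \<in> Y_cells" unfolding Y_cells_def using Jx(2) cotype_subset by blast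
next
  have "card (cell_of {} c0) = d + 1" using card_cell_of by simp
  moreover have "cell_of {} c0 \<in> Y_cells" unfolding Y_cells_def using base_in_P by blast
  ultimately show "\<exists>\<tau>\<in>Y_cells. card \<tau> = d + 1" by blast
qed

lemma residues_over_empty: "residues_over {} = {P}"
proof -
  have cotype: "cotype {} = {..d}" unfolding cotype_def by simp
  have "cell_of {..d} c0 = {}" unfolding cell_of_def by simp
  hence "residue {..d} c0 \<in> residues_over {}" unfolding residues_over_def cotype using base_in_P by blast
  moreover have "R = P" if "R \<in> residues_over {}" for R
    using that residue_all unfolding residues_over_def cotype by auto
  ultimately show ?thesis using residue_all[OF base_in_P] by blast
qed

lemma residues_over_vertex:
  assumes v: "{v} \<in> Y_cells" shows "\<exists>R. residues_over {v} = {R}"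
proof -
  obtain J x where Jx: "J \<subseteq> {..d}" "x \<in> P" "{v} = cell_of J x" using v unfolding Y_cells_def by blast
  have cotype: "cotype {v} = J" unfolding Jx(3) using cotype_cell_of[OF Jx(1)] .
  have "card ({..d} - J) = card {v}" using card_cell_of[of J x] Jx(3) by simp
  then obtain i where i: "{..d} - J = {i}" using card_1_singletonE by auto
  have Ji: "J = {..d} - {i}" using i Jx(1) by blast
  have "R = residue J x" if R: "R \<in> residues_over {v}" for R
  proof -
    obtain y where y: "R = residue J y" "y \<in> P" "cell_of J y = {v}"
      using R unfolding residues_over_def cotype by blast
    have "vertex i y = vertex i x" using y(3) Jx(3) i unfolding cell_of_def by auto
    hence "residue_rel J x y" using vertex_eqD[OF Jx(2) y(2), of i i] Ji by simp
    thus ?thesis using residue_eq[OF Jx(1,2)] y(1) by blast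
  qed
  moreover have "residue J x \<in> residues_over {v}" unfolding residues_over_def cotype using Jx by blast
  ultimately show ?thesis by blast
qed

lemma residues_over_nonempty: "\<tau> \<in> Y_cells \<Longrightarrow> residues_over \<tau> \<noteq> {}"
  unfolding Y_cells_def using residue_in_residues_over by blast

lemma Y_glue_mcell:
  assumes a: "a \<in> multicells Y" and s: "\<sigma> \<subseteq> fst a"
  shows "(\<sigma>, Y_glue a \<sigma>) \<in> multicells Y"
proof -
  obtain J x where Jx: "J \<subseteq> {..d}" "x \<in> P" "a = mcell_of J x" using ex_mcell_of[OF a] by blast
  hence "(\<sigma>, Y_glue a \<sigma>) = mcell_of (cotype \<sigma>) x"
    using Y_glue_mcell_of s by simp
  thus ?thesis using mcell_of_multicell(1)[OF cotype_subset Jx(2)] by simp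
qed

text \<open>Every face of \<open>mcell_of J x\<close> is \<open>mcell_of J' x\<close> for the same \<open>x\<close>, so gluing does not
  depend on the multicell a face is reached from.\<close>

lemma Y_glue_consistent:
  assumes "c \<in> multicells Y" "contained Y s1 c" "contained Y s2 c"
  shows "Y_glue s1 (fst s1 \<inter> fst s2) = Y_glue s2 (fst s1 \<inter> fst s2)"
proof -
  obtain J x where Jx: "J \<subseteq> {..d}" "x \<in> P" "c = mcell_of J x" using ex_mcell_of[OF assms(1)] by blast
  obtain J1 where J1: "J1 \<subseteq> {..d}" "s1 = mcell_of J1 x"
    using contained_Y_mcell_of[OF Jx(1,2)] assms(2) Jx(3) by blast
  obtain J2 where J2: "J2 \<subseteq> {..d}" "s2 = mcell_of J2 x"
    using contained_Y_mcell_of[OF Jx(1,2)] assms(3) Jx(3) by blast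
  let ?\<rho> = "fst s1 \<inter> fst s2"
  have "(?\<rho>, Y_glue s1 ?\<rho>) = mcell_of (cotype ?\<rho>) x"
    using Y_glue_mcell_of[OF J1(1) Jx(2)] J1(2) by simp
  moreover have "(?\<rho>, Y_glue s2 ?\<rho>) = mcell_of (cotype ?\<rho>) x"
    using Y_glue_mcell_of[OF J2(1) Jx(2)] J2(2) by simp
  ultimately have "(?\<rho>, Y_glue s1 ?\<rho>) = (?\<rho>, Y_glue s2 ?\<rho>)" by (rule trans[OF _ sym])
  thus ?thesis by simp
qed

lemma Y_multicomplex: "multicomplex d Y"
  unfolding multicomplex_def Y_simps
proof (intro conjI ballI allI impI)
  show "simplicial_complex d Y_cells" by (rule Y_simplicial_complex)
  show "card (residues_over {}) = 1" using residues_over_empty by simp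
next
  fix v assume "{v} \<in> Y_cells" thus "card (residues_over {v}) = 1" using residues_over_vertex by force
next
  fix \<tau> assume "\<tau> \<in> Y_cells" thus "1 \<le> card (residues_over \<tau>)"
    using residues_over_nonempty finite_residues_over by (simp add: Suc_leI card_gt_0_iff)
next
  fix a \<sigma> assume "a \<in> multicells Y" "face1 \<sigma> (fst a)"
  hence "(\<sigma>, Y_glue a \<sigma>) \<in> multicells Y" using Y_glue_mcell unfolding face1_def by blast
  thus "1 \<le> Y_glue a \<sigma>" "Y_glue a \<sigma> \<le> card (residues_over \<sigma>)" unfolding multicells_def by auto
next
  fix s1 s2 c assume "s1 \<in> multicells Y" "s2 \<in> multicells Y" "c \<in> multicells Y"
    "card (fst s1) = card (fst s2) \<and> contained Y s1 c \<and> contained Y s2 c \<and>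
       face1 (fst s1 \<inter> fst s2) (fst s1) \<and> face1 (fst s1 \<inter> fst s2) (fst s2)"
  thus "Y_glue s1 (fst s1 \<inter> fst s2) = Y_glue s2 (fst s1 \<inter> fst s2)" using Y_glue_consistent by blast
qed

lemma Y_chamber_mcell_of: assumes "a \<in> mcells_card Y (d+1)" shows "\<exists>x\<in>P. a = mcell_of {} x"
proof -
  have am: "a \<in> multicells Y" using assms unfolding mcells_card_def by simp
  obtain J x where Jx: "J \<subseteq> {..d}" "x \<in> P" "a = mcell_of J x" using ex_mcell_of[OF am] by blast
  have "card ({..d} - J) = d + 1" using mcell_of_mcells_card[OF Jx(1,2)] assms Jx(3) by simp
  hence "J = {}" using full_cotype_empty Jx(1) by blast
  thus ?thesis using Jx by blast
qed

lemma mcell_of_chamber: "x \<in> P \<Longrightarrow> mcell_of {} x \<in> mcells_card Y (d+1)"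
  using mcell_of_mcells_card[of "{}" x] by simp

lemma Y_panel_mcell_of: assumes "b \<in> mcells_card Y d" shows "\<exists>i\<in>{..d}. \<exists>x\<in>P. b = mcell_of {i} x"
proof -
  have am: "b \<in> multicells Y" using assms unfolding mcells_card_def by simp
  obtain J x where Jx: "J \<subseteq> {..d}" "x \<in> P" "b = mcell_of J x" using ex_mcell_of[OF am] by blast
  have c: "card ({..d} - J) = d" using mcell_of_mcells_card[OF Jx(1,2)] assms Jx(3) by simp
  have "card ({..d} - J) = card {..d} - card J" by (rule card_Diff_subset) (use Jx(1) finite_subset in auto)
  hence "card J = 1" using c card_mono[OF _ Jx(1)] by simp
  then obtain i where "J = {i}" using card_1_singletonE by blast
  thus ?thesis using Jx by blast
qed

lemma mcell_of_panel: assumes "i \<in> {..d}" "x \<in> P" shows "mcell_of {i} x \<in> mcells_card Y d"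
proof -
  have "card ({..d} - {i}) = d" using assms by simp
  thus ?thesis using mcell_of_mcells_card[of "{i}" x d] assms by simp
qed

lemma representative_chamber: assumes "x \<in> P" shows "representative (mcell_of {} x) = x"
proof -
  have "residue_rel {} x (representative (mcell_of {} x))" using representative_rel[of "{}" x] assms by simp
  thus ?thesis using residue_rel_empty by metis
qed

lemma Y_pure: "pure d Y"
  unfolding pure_def
proof
  fix a assume "a \<in> multicells Y"
  then obtain J x where Jx: "J \<subseteq> {..d}" "x \<in> P" "a = mcell_of J x" using ex_mcell_of by blast
  have "contained Y a (mcell_of {} x)" using contained_Y_mcell_of[of "{}" x a] Jx by blast
  thus "\<exists>c\<in>mcells_card Y (d + 1). contained Y a c" using mcell_of_chamber[OF Jx(2)] by blast
qed

lemma Y_coloring: "coloring d Y vertex_color"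
  unfolding coloring_def Y_simps
proof (intro conjI allI impI ballI)
  fix v assume "{v} \<in> Y_cells"
  then obtain J x where Jx: "J \<subseteq> {..d}" "x \<in> P" "{v} = cell_of J x" unfolding Y_cells_def by blast
  have "vertex_color v \<in> vertex_color ` cell_of J x" using Jx(3) by blast
  thus "vertex_color v \<le> d" unfolding vertex_color_cell_of by simp
next
  fix \<tau> assume "\<tau> \<in> Y_cells"
  then obtain J x where Jx: "J \<subseteq> {..d}" "x \<in> P" "\<tau> = cell_of J x" unfolding Y_cells_def by blast
  show "inj_on vertex_color \<tau>"
  proof (rule inj_onI)
    fix u v assume "u \<in> \<tau>" "v \<in> \<tau>" "vertex_color u = vertex_color v"
    then obtain i j where "u = vertex i x" "v = vertex j x" "vertex_color u = vertex_color v" using Jx(3) unfolding cell_of_def by blast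
    thus "u = v" by simp
  qed
qed

lemma neighbors_rot:
  assumes i: "i \<in> {..d}" and l: "l < k" and z: "z \<in> P"
  shows "neighbors d Y (mcell_of {} z) (mcell_of {} (rot i l z))"
proof -
  have w: "rot i l z \<in> P" using rot_in_P i l z by blast
  have "mcell_of {i} z = mcell_of {i} (rot i l z)"
    by (rule mcell_of_eq) (use i z rot_residue_rel[of i "{i}" l z] l in auto)
  hence "contained Y (mcell_of {i} z) (mcell_of {} z)" "contained Y (mcell_of {i} z) (mcell_of {} (rot i l z))"
    using contained_Y_mcell_of[of "{}"] i z w by blast+
  thus ?thesis unfolding neighbors_def using mcell_of_chamber z w mcell_of_panel[OF i z] by blast
qed

lemma Y_lower_path_connected: "lower_path_connected d Y"
  unfolding lower_path_connected_def
proof (intro ballI)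
  fix a a' assume a: "a \<in> mcells_card Y (d + 1)" and a': "a' \<in> mcells_card Y (d + 1)"
  obtain x where x: "x \<in> P" "a = mcell_of {} x" using Y_chamber_mcell_of[OF a] by blast
  obtain y where y: "y \<in> P" "a' = mcell_of {} y" using Y_chamber_mcell_of[OF a'] by blast
  have "(rot_step {..d})\<^sup>*\<^sup>* x y" using residue_rel_all x y unfolding residue_rel_def by blast
  hence "(neighbors d Y)\<^sup>*\<^sup>* (mcell_of {} x) (mcell_of {} y)"
  proof (induction rule: rtranclp_induct)
    case base then show ?case by simp
  next
    case (step z w)
    have "z \<in> P" using residue_rel_in_P[of "{..d}" x z] x step(1) unfolding residue_rel_def by blast
    thus ?case using step(2,3) neighbors_rot unfolding rot_step_def by fastforce
  qed
  thus "(neighbors d Y)\<^sup>*\<^sup>* a a'" using x y by simp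
qed

lemma residue_single: assumes "i \<in> {..d}" "x \<in> P" shows "residue {i} x = (\<lambda>l. rot i l x) ` {..<k}"
proof
  show "residue {i} x \<subseteq> (\<lambda>l. rot i l x) ` {..<k}"
  proof
    fix y assume "y \<in> residue {i} x"
    hence "residue_rel {i} x y" unfolding residue_def by simp
    then obtain l where "l < k" "y = rot i l x" using residue_rel_single assms by blast
    thus "y \<in> (\<lambda>l. rot i l x) ` {..<k}" by blast
  qed
  show "(\<lambda>l. rot i l x) ` {..<k} \<subseteq> residue {i} x" unfolding residue_def using rot_residue_rel[of i "{i}"] by auto
qed

lemma delta_Y: assumes i: "i \<in> {..d}" and x: "x \<in> P"
  shows "delta d Y (mcell_of {i} x) = (\<lambda>y. mcell_of {} y) ` residue {i} x"
proof
  show "delta d Y (mcell_of {i} x) \<subseteq> (\<lambda>y. mcell_of {} y) ` residue {i} x"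
  proof
    fix a assume "a \<in> delta d Y (mcell_of {i} x)"
    hence a: "a \<in> mcells_card Y (d+1)" "contained Y (mcell_of {i} x) a" unfolding delta_def by auto
    obtain y where y: "y \<in> P" "a = mcell_of {} y" using Y_chamber_mcell_of[OF a(1)] by blast
    obtain J' where J': "J' \<subseteq> {..d}" "mcell_of {i} x = mcell_of J' y" using contained_Y_mcell_of[of "{}" y] a(2) y by blast
    have "{i} = J' \<and> residue_rel {i} x y" by (rule mcell_of_eqD) (use i x y J' in auto)
    hence "y \<in> residue {i} x" unfolding residue_def by blast
    thus "a \<in> (\<lambda>y. mcell_of {} y) ` residue {i} x" using y by blast
  qed
  show "(\<lambda>y. mcell_of {} y) ` residue {i} x \<subseteq> delta d Y (mcell_of {i} x)"
  proof
    fix a assume "a \<in> (\<lambda>y. mcell_of {} y) ` residue {i} x"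
    then obtain y where y: "residue_rel {i} x y" "a = mcell_of {} y" unfolding residue_def by blast
    have yP: "y \<in> P" using residue_rel_in_P[of "{i}" x y] i x y by blast
    have eq: "mcell_of {i} x = mcell_of {i} y" by (rule mcell_of_eq) (use i x y in auto)
    have "contained Y (mcell_of {i} x) (mcell_of {} y)" using contained_Y_mcell_of[of "{}" y] eq i yP by blast
    thus "a \<in> delta d Y (mcell_of {i} x)" unfolding delta_def using mcell_of_chamber[OF yP] y by blast
  qed
qed

lemma Y_degree_bounded: "degree_bounded d k Y"
  unfolding degree_bounded_def
proof
  fix b assume "b \<in> mcells_card Y d"
  then obtain i x where ix: "i \<in> {..d}" "x \<in> P" "b = mcell_of {i} x" using Y_panel_mcell_of by blast
  have "delta d Y b = (\<lambda>y. mcell_of {} y) ` (\<lambda>l. rot i l x) ` {..<k}" using delta_Y[OF ix(1,2)] residue_single[OF ix(1,2)] ix(3) by simp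
  moreover have "card ((\<lambda>y. mcell_of {} y) ` (\<lambda>l. rot i l x) ` {..<k}) \<le> k"
    by (metis card_image_le card_lessThan finite_imageI finite_lessThan le_trans)
  ultimately show "finite (delta d Y b) \<and> card (delta d Y b) \<le> k" by simp
qed

text \<open>A panel of \<open>Y\<close> misses exactly one colour, which \<open>Min\<close> extracts.\<close>

definition Y_ordering :: "mcell \<Rightarrow> nat \<Rightarrow> mcell \<Rightarrow> mcell" where
  "Y_ordering b l a = mcell_of {} (rot (Min (cotype (fst b))) l (representative a))"

lemma Y_ordering_mcell_of: assumes "i \<in> {..d}" "x \<in> P" "y \<in> P"
  shows "Y_ordering (mcell_of {i} x) l (mcell_of {} y) = mcell_of {} (rot i l y)"
proof -
  have "cotype (fst (mcell_of {i} x)) = {i}" using cotype_cell_of[of "{i}" x] assms(1) by simp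
  thus ?thesis unfolding Y_ordering_def using representative_chamber[OF assms(3)] by simp
qed

lemma Y_ordering_residue:
  assumes "i \<in> {..d}" "x \<in> P" "y \<in> residue {i} x"
  shows "Y_ordering (mcell_of {i} x) l (mcell_of {} y) = mcell_of {} (rot i l y)"
  using Y_ordering_mcell_of[OF assms(1,2)] residue_subset[of "{i}" x] assms by blast

lemma rot_residue_closed: "y \<in> residue {i} x \<Longrightarrow> l < k \<Longrightarrow> rot i l y \<in> residue {i} x"
  using rot_residue_rel[of i "{i}" l y] residue_rel_trans unfolding residue_def by blast

lemma Y_ordering_inverse:
  assumes b: "b \<in> mcells_card Y d" and a: "a \<in> delta d Y b" and l: "l < k"
  shows "Y_ordering b l a \<in> delta d Y b" and "Y_ordering b ((k - l) mod k) (Y_ordering b l a) = a"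
proof -
  obtain i x where ix: "i \<in> {..d}" "x \<in> P" "b = mcell_of {i} x" using Y_panel_mcell_of[OF b] by blast
  obtain y where y: "y \<in> residue {i} x" "a = mcell_of {} y" using a delta_Y[OF ix(1,2)] ix(3) by blast
  have ly: "rot i l y \<in> residue {i} x" using rot_residue_closed[OF y(1) l] .
  show "Y_ordering b l a \<in> delta d Y b"
    using Y_ordering_residue[OF ix(1,2) y(1)] ly delta_Y[OF ix(1,2)] ix(3) y(2) by simp
  have "rot i ((k - l) mod k) (rot i l y) = y"
    using rot_inverse ix(1) l residue_subset[of "{i}" x] ix(2) y(1) by blast
  thus "Y_ordering b ((k - l) mod k) (Y_ordering b l a) = a"
    using Y_ordering_residue[OF ix(1,2)] y ly ix(3) by simp
qed

lemma Y_k_ordering: "k_ordering d k Y Y_ordering"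
  unfolding k_ordering_def
proof (intro ballI conjI allI impI)
  fix b assume b: "b \<in> mcells_card Y d"
  then obtain i x where ix: "i \<in> {..d}" "x \<in> P" "b = mcell_of {i} x" using Y_panel_mcell_of by blast
  have i: "i \<le> d" and x: "x \<in> P" using ix by auto
  have resP: "residue {i} x \<subseteq> P" using residue_subset[of "{i}" x] ix by blast
  have del: "delta d Y b = mcell_of {} ` residue {i} x" using delta_Y[OF ix(1,2)] ix(3) by simp
  have act: "Y_ordering b l (mcell_of {} y) = mcell_of {} (rot i l y)" if "y \<in> residue {i} x" for y l
    using Y_ordering_residue[OF ix(1,2) that] ix(3) by simp
  {
    fix l assume l: "l < k"
    have "(k - l) mod k < k" "(k - (k - l) mod k) mod k = l"
      using l mod_complement_complement by auto
    thus "bij_betw (Y_ordering b l) (delta d Y b) (delta d Y b)"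
      using Y_ordering_inverse[OF b _ l] Y_ordering_inverse[OF b, of _ "(k - l) mod k"]
      by (intro bij_betw_byWitness[where f' = "Y_ordering b ((k - l) mod k)"]) auto
  }
  {
    fix a assume "a \<in> delta d Y b"
    then obtain y where y: "y \<in> residue {i} x" "a = mcell_of {} y" using del by blast
    show "Y_ordering b 0 a = a" using act[OF y(1)] rot_0[OF i] resP y by auto
  }
  {
    fix l l' a assume l: "l < k" and l': "l' < k" and "a \<in> delta d Y b"
    then obtain y where y: "y \<in> residue {i} x" "a = mcell_of {} y" using del by blast
    have "Y_ordering b ((l + l') mod k) a = mcell_of {} (rot i ((l + l') mod k) y)" using act y by simp
    also have "\<dots> = mcell_of {} (rot i l (rot i l' y))" using rot_add[OF i l l'] resP y by auto
    also have "\<dots> = Y_ordering b l (Y_ordering b l' a)" using act y rot_residue_closed l' by simp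
    finally show "Y_ordering b ((l + l') mod k) a = Y_ordering b l (Y_ordering b l' a)" .
  }
  {
    fix a a' assume "a \<in> delta d Y b" "a' \<in> delta d Y b"
    then obtain y y' where y: "y \<in> residue {i} x" "a = mcell_of {} y"
      and y': "y' \<in> residue {i} x" "a' = mcell_of {} y'"
      using del by blast
    then obtain l where "l < k" "y' = rot i l y" using residue_single_transitive[OF i x] by blast
    thus "\<exists>l<k. Y_ordering b l a = a'" using act y y' by blast
  }
qed

lemma card_colors_diff: assumes "J \<subseteq> {..d}" shows "card ({..d} - J) + card J = d + 1"
proof -
  have "card ({..d} - J) = card {..d} - card J" by (rule card_Diff_subset) (use assms finite_subset in auto)
  moreover have "card J \<le> card {..d}" by (rule card_mono) (use assms in auto)
  ultimately show ?thesis by simp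
qed

lemma link_vertex_cases: assumes J: "J \<subseteq> {..d}" and c: "c \<in> P" and b: "b \<in> link_vertices Y (mcell_of J c)"
  shows "\<exists>j\<in>J. \<exists>y. residue_rel J c y \<and> b = mcell_of (J - {j}) y"
proof -
  have b1: "b \<in> mcells_card Y (card (cell_of J c) + 1)" "contained Y (mcell_of J c) b"
    using b unfolding link_vertices_def by auto
  have bm: "b \<in> multicells Y" using b1 unfolding mcells_card_def by simp
  obtain J' y where Jy: "J' \<subseteq> {..d}" "y \<in> P" "b = mcell_of J' y" using ex_mcell_of[OF bm] by blast
  obtain J'' where J'': "J' \<subseteq> J''" "J'' \<subseteq> {..d}" "mcell_of J c = mcell_of J'' y"
    using contained_Y_mcell_of[OF Jy(1,2)] b1(2) Jy(3) by blast
  have "J = J'' \<and> residue_rel J c y" by (rule mcell_of_eqD) (use J c J'' Jy in auto)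
  hence JJ: "J = J''" "residue_rel J c y" by auto
  have "card ({..d} - J') = card ({..d} - J) + 1" using b1(1) Jy mcell_of_mcells_card[OF Jy(1,2)] card_cell_of by simp
  hence "card J = card J' + 1" using card_colors_diff[OF J] card_colors_diff[OF Jy(1)] by simp
  moreover have "card (J - J') = card J - card J'"
  proof (rule card_Diff_subset)
    show "finite J'" using Jy(1) finite_subset by blast
    show "J' \<subseteq> J" using J'' JJ by simp
  qed
  ultimately have "card (J - J') = 1" by simp
  then obtain j where j: "J - J' = {j}" using card_1_singletonE by blast
  hence "J' = J - {j}" "j \<in> J" using J'' JJ by blast+
  thus ?thesis using JJ Jy by blast
qed

lemma card_colors_diff_remove:
  assumes "J \<subseteq> {..d}" "j \<in> J" shows "card ({..d} - (J - {j})) = card ({..d} - J) + 1"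
proof -
  have "j \<in> {..d} - (J - {j})" using assms by auto
  from card_colors_diff_insert[OF this] show ?thesis using assms(2) by (simp add: insert_absorb)
qed

lemma link_vertex_intro:
  assumes J: "J \<subseteq> {..d}" and c: "c \<in> P" and j: "j \<in> J" and r: "residue_rel J c y"
  shows "mcell_of (J - {j}) y \<in> link_vertices Y (mcell_of J c)"
proof -
  have yP: "y \<in> P" using residue_rel_in_P J r c by blast
  have JD: "J - {j} \<subseteq> {..d}" using J by blast
  have "mcell_of (J - {j}) y \<in> mcells_card Y (card (cell_of J c) + 1)"
    using mcell_of_mcells_card[of "J - {j}" y] yP J card_colors_diff_remove[OF J j] JD
    by (simp add: card_cell_of)
  moreover have "contained Y (mcell_of J c) (mcell_of (J - {j}) y)"
    using contained_mcell_of_mono[of "J - {j}" J y] mcell_of_eq[OF J c r] J yP by auto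
  ultimately show ?thesis unfolding link_vertices_def by simp
qed

lemma link_adj_intro:
  assumes J: "J \<subseteq> {..d}" and c: "c \<in> P" and j: "j \<in> J" "j' \<in> J" "j \<noteq> j'" and r: "residue_rel J c y"
  shows "link_adj Y (mcell_of J c) (mcell_of (J - {j}) y) (mcell_of (J - {j'}) y)"
proof -
  have yP: "y \<in> P" using residue_rel_in_P J r c by blast
  have JD: "J - {j, j'} \<subseteq> {..d}" using J by blast
  have "{..d} - (J - {j, j'}) = insert j (insert j' ({..d} - J))" using j J by auto
  hence "card ({..d} - (J - {j, j'})) = card (cell_of J c) + 2" using j by (simp add: card_cell_of)
  hence "mcell_of (J - {j, j'}) y \<in> mcells_card Y (card (fst (mcell_of J c)) + 2)"
    using mcell_of_mcells_card[of "J - {j, j'}" y] JD yP by simp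
  moreover have sub: "contained Y (mcell_of J' y) (mcell_of (J - {j, j'}) y)"
    if "J - {j, j'} \<subseteq> J'" "J' \<subseteq> J" for J'
    using contained_mcell_of_mono that J yP by blast
  have "contained Y (mcell_of J c) (mcell_of (J - {j, j'}) y)"
    using sub[of J] mcell_of_eq[OF J c r] by simp
  moreover have "contained Y (mcell_of (J - {j}) y) (mcell_of (J - {j, j'}) y)"
    by (rule sub) auto
  moreover have "contained Y (mcell_of (J - {j'}) y) (mcell_of (J - {j, j'}) y)"
    by (rule sub) auto
  ultimately show ?thesis
    unfolding link_adj_def using link_vertex_intro[OF J c j(1) r] link_vertex_intro[OF J c j(2) r] by blast
qed

lemma link_adj_rtrancl: assumes J: "J \<subseteq> {..d}" and c: "c \<in> P" and j: "j \<in> J" "j' \<in> J" and r: "residue_rel J c y"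
  shows "(link_adj Y (mcell_of J c))\<^sup>*\<^sup>* (mcell_of (J - {j}) y) (mcell_of (J - {j'}) y)"
proof (cases "j = j'")
  case True then show ?thesis by simp
next
  case False then show ?thesis using link_adj_intro[OF J c j False r] by (rule_tac r_into_rtranclp)
qed

text \<open>Rotating with colour \<open>m\<close> fixes the facet \<open>J - {j''}\<close> of the link for every \<open>j'' \<noteq> m\<close>;
  one exists because \<open>|J| \<ge> 2\<close>.\<close>

lemma link_path: assumes J: "J \<subseteq> {..d}" and c: "c \<in> P" and two: "2 \<le> card J" and r: "residue_rel J c y"
  and yz: "residue_rel J y z" and j: "j \<in> J" "j' \<in> J"
  shows "(link_adj Y (mcell_of J c))\<^sup>*\<^sup>* (mcell_of (J - {j}) y) (mcell_of (J - {j'}) z)"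
proof -
  have "(rot_step J)\<^sup>*\<^sup>* y z" using yz unfolding residue_rel_def .
  thus ?thesis using j(2)
  proof (induction arbitrary: j' rule: rtranclp_induct)
    case base
    then show ?case using link_adj_rtrancl[OF J c j(1) _ r] by blast
  next
    case (step z w)
    obtain m l where ml: "m \<in> J" "l < k" "w = rot m l z" using step(2) unfolding rot_step_def by blast
    have "card (J - {m}) = card J - 1" using ml(1) by simp
    hence "J - {m} \<noteq> {}" using two by (intro notI) simp
    then obtain j'' where j'': "j'' \<in> J" "j'' \<noteq> m" by blast
    have rcz: "residue_rel J c z" using r step(1) residue_rel_trans unfolding residue_rel_def by simp
    have zP: "z \<in> P" using residue_rel_in_P[OF J rcz c] .
    have rzw: "residue_rel (J - {j''}) z w" using rot_residue_rel[of m "J - {j''}" l z] ml j'' by simp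
    have eq: "mcell_of (J - {j''}) z = mcell_of (J - {j''}) w" by (rule mcell_of_eq) (use J zP rzw in auto)
    have rcw: "residue_rel J c w" using rcz rot_residue_rel[of m J l z] ml residue_rel_trans by simp
    have "(link_adj Y (mcell_of J c))\<^sup>*\<^sup>* (mcell_of (J - {j}) y) (mcell_of (J - {j''}) z)" using step(3) j''(1) by blast
    moreover have "(link_adj Y (mcell_of J c))\<^sup>*\<^sup>* (mcell_of (J - {j''}) w) (mcell_of (J - {j'}) w)"
      using link_adj_rtrancl[OF J c j''(1) step(4) rcw] by simp
    ultimately show ?case using eq by simp
  qed
qed

lemma Y_link_connected: "link_connected d Y"
  unfolding link_connected_def
proof (intro ballI impI)
  fix a b b' assume a: "a \<in> multicells Y" and cd: "card (fst a) + 1 \<le> d"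
    and b: "b \<in> link_vertices Y a" and b': "b' \<in> link_vertices Y a"
  obtain J c where Jc: "J \<subseteq> {..d}" "c \<in> P" "a = mcell_of J c" using ex_mcell_of[OF a] by blast
  have "card ({..d} - J) + 1 \<le> d" using cd Jc(3) card_cell_of by simp
  hence two: "2 \<le> card J" using card_colors_diff[OF Jc(1)] by simp
  obtain j y where jy: "j \<in> J" "residue_rel J c y" "b = mcell_of (J - {j}) y" using link_vertex_cases[OF Jc(1,2)] b Jc(3) by blast
  obtain j' z where jz: "j' \<in> J" "residue_rel J c z" "b' = mcell_of (J - {j'}) z" using link_vertex_cases[OF Jc(1,2)] b' Jc(3) by blast
  have "residue_rel J y c" using residue_rel_sym[OF Jc(1) jy(2) Jc(2)] .
  hence "residue_rel J y z" using jz(2) residue_rel_trans by blast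
  from link_path[OF Jc(1,2) two jy(2) this jy(1) jz(1)]
  show "(link_adj Y a)\<^sup>*\<^sup>* b b'" using jy(3) jz(3) Jc(3) by simp
qed

lemma Y_obj: "obj d k Y vertex_color Y_ordering (mcell_of {} c0)"
  unfolding obj_def colorable_def
  using Y_multicomplex Y_pure Y_coloring Y_lower_path_connected Y_degree_bounded Y_k_ordering mcell_of_chamber[OF base_in_P] by blast

lemma Y_finite: "finite (multicells Y)"
proof -
  have "multicells Y \<subseteq> (\<lambda>(J, c). mcell_of J c) ` (Pow {..d} \<times> P)"
  proof
    fix a assume "a \<in> multicells Y"
    then obtain J c where "J \<subseteq> {..d}" "c \<in> P" "a = mcell_of J c" using ex_mcell_of by blast
    thus "a \<in> (\<lambda>(J, c). mcell_of J c) ` (Pow {..d} \<times> P)" by force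
  qed
  thus ?thesis using finite_P finite_subset by blast
qed

end

section \<open>Equivariant maps to an object\<close>

locale chamber_map = Sys: chamber_system d k P rot c0 + Tgt: ck_object d X \<gamma> k \<omega> a0
  for d k :: nat and P :: "'c set" and rot c0 and X \<gamma> \<omega> a0 +
  fixes p :: "'c \<Rightarrow> mcell"
  assumes p_chamber: "\<And>x. x \<in> P \<Longrightarrow> p x \<in> mcells_card X (d + 1)"
    and p_base: "p c0 = a0"
    and p_rot: "\<And>i l x. i \<le> d \<Longrightarrow> l < k \<Longrightarrow> x \<in> P \<Longrightarrow> p (rot i l x) = Tgt.rotate i l (p x)"
begin

lemma chamber_in_p_image: assumes "x \<in> mcells_card X (d + 1)" shows "\<exists>c\<in>P. p c = x"
proof -
  have "(neighbors d X)\<^sup>*\<^sup>* a0 x"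
    using Tgt.X_lower_path_connected Tgt.root_chamber assms unfolding lower_path_connected_def by blast
  thus ?thesis
  proof (induction rule: rtranclp_induct)
    case base then show ?case using Sys.base_in_P p_base by blast
  next
    case (step y z)
    obtain c where c: "c \<in> P" "p c = y" using step(3) by blast
    obtain i l where il: "i \<le> d" "l < k" "z = Tgt.rotate i l y" using Tgt.neighbors_rotate[OF step(2)] by blast
    have "rot i l c \<in> P" using Sys.rot_in_P il c by blast
    moreover have "p (rot i l c) = z" using p_rot[OF il(1,2) c(1)] c il by simp
    ultimately show ?case by blast
  qed
qed

lemma colored_face_residue_rel:
  assumes J: "J \<subseteq> {..d}" and x: "x \<in> P" and r: "Sys.residue_rel J x y" and T: "T \<inter> J = {}"
  shows "Tgt.colored_face (p y) T = Tgt.colored_face (p x) T"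
proof -
  have "(Sys.rot_step J)\<^sup>*\<^sup>* x y" using r unfolding Sys.residue_rel_def .
  thus ?thesis
  proof (induction rule: rtranclp_induct)
    case base then show ?case by simp
  next
    case (step y z)
    have yP: "y \<in> P" using Sys.residue_rel_in_P[OF J _ x] step(1) unfolding Sys.residue_rel_def by blast
    obtain m l where ml: "m \<in> J" "l < k" "z = rot m l y" using step(2) unfolding Sys.rot_step_def by blast
    have md: "m \<le> d" using ml J by auto
    have mT: "m \<notin> T" using ml T by blast
    have "p z = Tgt.rotate m l (p y)" using p_rot[OF md ml(2) yP] ml by simp
    thus ?case using Tgt.rotate_colored_face[OF p_chamber[OF yP] md ml(2) mT] step(3) by simp
  qed
qed

definition proj :: "mcell \<Rightarrow> mcell" where
  "proj a = Tgt.colored_face (p (Sys.representative a)) (Sys.vertex_color ` fst a)"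

lemma proj_mcell_of:
  assumes J: "J \<subseteq> {..d}" and c: "c \<in> P" shows "proj (Sys.mcell_of J c) = Tgt.colored_face (p c) ({..d} - J)"
proof -
  have r: "Sys.residue_rel J c (Sys.representative (Sys.mcell_of J c))"
    using Sys.representative_rel[OF J c] by blast
  have "({..d} - J) \<inter> J = {}" by blast
  from colored_face_residue_rel[OF J c r this] show ?thesis
    unfolding proj_def Sys.fst_mcell_of Sys.vertex_color_cell_of by simp
qed

lemma proj_chamber: "c \<in> P \<Longrightarrow> proj (Sys.mcell_of {} c) = p c"
  using proj_mcell_of[of "{}" c] Tgt.colored_face_all[OF p_chamber] by simp

lemma proj_panel:
  assumes i: "i \<le> d" and x: "x \<in> P" and y: "y \<in> Sys.residue {i} x"
  shows "proj (Sys.mcell_of {i} x) = Tgt.panel i (p y)"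
proof -
  have "Sys.residue_rel {i} x y" using y unfolding Sys.residue_def by simp
  hence "Tgt.colored_face (p y) ({..d} - {i}) = Tgt.colored_face (p x) ({..d} - {i})"
    using colored_face_residue_rel[of "{i}" x y] i x by auto
  thus ?thesis using proj_mcell_of[of "{i}" x] i x unfolding Tgt.panel_def by simp
qed

lemma proj_multicell: assumes "a \<in> multicells Sys.Y" shows "proj a \<in> multicells X"
proof -
  obtain J c where Jc: "J \<subseteq> {..d}" "c \<in> P" "a = Sys.mcell_of J c" using Sys.ex_mcell_of[OF assms] by blast
  show ?thesis using proj_mcell_of[OF Jc(1,2)] Jc(3) Tgt.colored_face_multicell[OF p_chamber[OF Jc(2)]] by simp
qed

text \<open>The colour-\<open>i\<close> vertex of \<open>p c\<close> only depends on the \<open>({..d} - {i})\<close>-residue of \<open>c\<close>,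
  so the representative chosen by \<open>SOME\<close> does not matter.\<close>

definition vertex_map :: "nat \<Rightarrow> nat" where
  "vertex_map n = Tgt.chamber_vertex (p (SOME c. c \<in> P \<and> Sys.vertex (Sys.vertex_color n) c = n))
     (Sys.vertex_color n)"

lemma vertex_map_vertex:
  assumes c: "c \<in> P" and i: "i \<le> d" shows "vertex_map (Sys.vertex i c) = Tgt.chamber_vertex (p c) i"
proof -
  let ?c' = "SOME c'. c' \<in> P \<and> Sys.vertex i c' = Sys.vertex i c"
  have "\<exists>c'. c' \<in> P \<and> Sys.vertex i c' = Sys.vertex i c" using c by blast
  hence c': "?c' \<in> P" "Sys.vertex i ?c' = Sys.vertex i c" by (metis (mono_tags, lifting) someI_ex)+
  have r: "Sys.residue_rel ({..d} - {i}) c ?c'" using Sys.vertex_eqD[OF c c'(1) c'(2)[symmetric]] by blast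
  have "{i} \<inter> ({..d} - {i}) = {}" by blast
  from colored_face_residue_rel[OF _ c r this]
  have "Tgt.colored (p ?c') {i} = Tgt.colored (p c) {i}" by (metis Diff_subset Tgt.fst_colored_face)
  hence "Tgt.chamber_vertex (p ?c') i = Tgt.chamber_vertex (p c) i"
    using Tgt.colored_singleton p_chamber c c'(1) i by (metis singleton_inject)
  thus ?thesis unfolding vertex_map_def by simp
qed

lemma vertex_map_cell_of:
  assumes J: "J \<subseteq> {..d}" and c: "c \<in> P" shows "vertex_map ` Sys.cell_of J c = Tgt.colored (p c) ({..d} - J)"
proof -
  have "vertex_map ` Sys.cell_of J c = (\<lambda>i. vertex_map (Sys.vertex i c)) ` ({..d} - J)"
    unfolding Sys.cell_of_def by (simp add: image_image)
  also have "\<dots> = Tgt.chamber_vertex (p c) ` ({..d} - J)" using vertex_map_vertex[OF c] by (intro image_cong) auto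
  also have "\<dots> = Tgt.colored (p c) ({..d} - J)" using Tgt.colored_eq_image[OF p_chamber[OF c]] by simp
  finally show ?thesis .
qed

lemma proj_glue:
  assumes a: "a \<in> multicells Sys.Y" and f: "face1 \<sigma> (fst a)"
  shows "proj (\<sigma>, glue Sys.Y a \<sigma>) = (vertex_map ` \<sigma>, glue X (proj a) (vertex_map ` \<sigma>))"
proof -
  obtain J c where Jc: "J \<subseteq> {..d}" "c \<in> P" "a = Sys.mcell_of J c" using Sys.ex_mcell_of[OF a] by blast
  have f': "face1 \<sigma> (Sys.cell_of J c)" using f Jc(3) by simp
  obtain i where i: "i \<in> {..d} - J" "\<sigma> = Sys.cell_of (insert i J) c" using Sys.face1_cell_of[OF Jc(1) f'] by blast
  have iJ: "insert i J \<subseteq> {..d}" using i Jc(1) by blast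
  have "(\<sigma>, glue Sys.Y a \<sigma>) = Sys.mcell_of (Sys.cotype \<sigma>) c"
    using Sys.Y_glue_mcell_of[OF Jc(1,2)] f' Jc(3) unfolding face1_def by simp
  also have "Sys.cotype \<sigma> = insert i J" using i(2) Sys.cotype_cell_of[OF iJ] by simp
  finally have gl: "proj (\<sigma>, glue Sys.Y a \<sigma>) = Tgt.colored_face (p c) ({..d} - insert i J)"
    using proj_mcell_of[OF iJ Jc(2)] by simp
  have pc: "p c \<in> mcells_card X (d + 1)" using p_chamber[OF Jc(2)] .
  let ?V' = "Tgt.colored (p c) ({..d} - insert i J)"
  have pa: "proj a = Tgt.colored_face (p c) ({..d} - J)" using proj_mcell_of[OF Jc(1,2)] Jc(3) by simp
  have "{..d} - insert i J = ({..d} - J) - {i}" by blast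
  hence "face1 ?V' (fst (proj a))" using Tgt.face1_colored[OF pc _, of "{..d} - J" i] i pa by simp
  hence "(?V', glue X (proj a) ?V') = Tgt.face (proj a) ?V'"
    using Tgt.face_facet proj_multicell[OF a] by simp
  also have "\<dots> = Tgt.face (p c) ?V'"
    unfolding pa by (rule Tgt.face_of_contained[OF _ Tgt.contained_colored_face[OF pc]])
      (use Tgt.chamber_multicell[OF pc] in \<open>auto simp: Tgt.colored_def\<close>)
  finally show ?thesis using gl vertex_map_cell_of[OF iJ Jc(2)] i(2) unfolding Tgt.colored_face_def by simp
qed

lemma proj_ordering:
  assumes b: "b \<in> mcells_card Sys.Y d" and a: "a \<in> delta d Sys.Y b" and l: "l < k"
  shows "proj (Sys.Y_ordering b l a) = \<omega> (proj b) l (proj a)"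
proof -
  obtain i x where ix: "i \<in> {..d}" "x \<in> P" "b = Sys.mcell_of {i} x" using Sys.Y_panel_mcell_of[OF b] by blast
  obtain y where y: "y \<in> Sys.residue {i} x" "a = Sys.mcell_of {} y"
    using a Sys.delta_Y[OF ix(1,2)] ix(3) by blast
  have i: "i \<le> d" using ix by simp
  have yP: "y \<in> P" using Sys.residue_subset[of "{i}" x] ix y by blast
  have "proj (Sys.Y_ordering b l a) = p (rot i l y)"
    using Sys.Y_ordering_residue[OF ix(1,2) y(1)] proj_chamber Sys.rot_in_P[OF i l yP] ix(3) y(2) by simp
  also have "\<dots> = \<omega> (Tgt.panel i (p y)) l (p y)" using p_rot[OF i l yP] unfolding Tgt.rotate_def .
  finally show ?thesis using proj_panel[OF i ix(2) y(1)] proj_chamber[OF yP] ix(3) y(2) by simp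
qed

lemma proj_morphism: "morphism d k Sys.Y Sys.vertex_color Sys.Y_ordering (Sys.mcell_of {} c0) X \<gamma> \<omega> a0 proj"
  unfolding morphism_def
proof (intro conjI ballI allI impI)
  show "\<exists>f. (\<forall>\<tau>\<in>cells Sys.Y. f ` \<tau> \<in> cells X) \<and> (\<forall>a\<in>multicells Sys.Y. fst (proj a) = f ` fst a) \<and>
     (\<forall>a\<in>multicells Sys.Y. \<forall>\<sigma>. face1 \<sigma> (fst a) \<longrightarrow>
        proj (\<sigma>, glue Sys.Y a \<sigma>) = (f ` \<sigma>, glue X (proj a) (f ` \<sigma>)))"
  proof (rule exI[of _ vertex_map], intro conjI ballI allI impI)
    fix \<tau> assume "\<tau> \<in> cells Sys.Y"
    then obtain J c where Jc: "J \<subseteq> {..d}" "c \<in> P" "\<tau> = Sys.cell_of J c"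
      unfolding Sys.Y_simps Sys.Y_cells_def by blast
    have "vertex_map ` \<tau> \<subseteq> fst (p c)" using vertex_map_cell_of[OF Jc(1,2)] Jc(3) Tgt.colored_subset by simp
    thus "vertex_map ` \<tau> \<in> cells X"
      using Tgt.cell_subset_closed Tgt.chamber_multicell[OF p_chamber[OF Jc(2)]] by blast
  next
    fix a assume "a \<in> multicells Sys.Y"
    then obtain J c where Jc: "J \<subseteq> {..d}" "c \<in> P" "a = Sys.mcell_of J c" using Sys.ex_mcell_of by blast
    show "fst (proj a) = vertex_map ` fst a"
      using proj_mcell_of[OF Jc(1,2)] vertex_map_cell_of[OF Jc(1,2)] Jc(3) by simp
  qed (use proj_glue in blast)
next
  fix a assume "a \<in> multicells Sys.Y"
  then obtain J c where Jc: "J \<subseteq> {..d}" "c \<in> P" "a = Sys.mcell_of J c" using Sys.ex_mcell_of by blast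
  have "\<gamma> ` fst (proj a) = ({..d} - J) \<inter> {..d}"
    using proj_mcell_of[OF Jc(1,2)] Jc(3) Tgt.color_colored[OF p_chamber[OF Jc(2)]] by simp
  thus "\<gamma> ` fst (proj a) = Sys.vertex_color ` fst a" using Jc(3) Sys.vertex_color_cell_of by auto
qed (use proj_multicell proj_chamber[OF Sys.base_in_P] p_base proj_ordering in auto)

lemma proj_surjective: "surjective_morphism Sys.Y X proj"
  unfolding surjective_morphism_def
proof
  show "proj ` multicells Sys.Y \<subseteq> multicells X" using proj_multicell by blast
  show "multicells X \<subseteq> proj ` multicells Sys.Y"
  proof
    fix m assume m: "m \<in> multicells X"
    obtain ch where ch: "ch \<in> mcells_card X (d + 1)" "contained X m ch"
      using Tgt.X_pure m unfolding pure_def by blast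
    obtain c where c: "c \<in> P" "p c = ch" using chamber_in_p_image[OF ch(1)] by blast
    let ?T = "\<gamma> ` fst m"
    have ms: "fst m \<subseteq> fst ch" using Tgt.contained_multicells[OF ch(2)] Tgt.chamber_multicell[OF ch(1)] by blast
    have T: "?T \<subseteq> {..d}" using Tgt.color_chamber[OF ch(1)] ms by blast
    have J: "{..d} - ?T \<subseteq> {..d}" by blast
    have "proj (Sys.mcell_of ({..d} - ?T) c) = Tgt.colored_face ch ?T"
      using proj_mcell_of[OF J c(1)] T c(2) by (simp add: double_diff)
    also have "\<dots> = Tgt.face ch (fst m)" unfolding Tgt.colored_face_def Tgt.colored_color[OF ch(1) ms] ..
    also have "\<dots> = m" using Tgt.face_eq[OF _ ch(2)] Tgt.chamber_multicell[OF ch(1)] by blast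
    finally show "m \<in> proj ` multicells Sys.Y" using Sys.mcell_of_multicell(1)[OF J c(1)] by (metis imageI)
  qed
qed

end

section \<open>Common covers of two objects\<close>

locale ck_object_pair = X1: ck_object d X1 \<gamma>1 k \<omega>1 a1 + X2: ck_object d X2 \<gamma>2 k \<omega>2 a2
  for d X1 \<gamma>1 k \<omega>1 a1 X2 \<gamma>2 \<omega>2 a2 +
  assumes k_pos: "1 \<le> k" and finite_X1: "finite (multicells X1)" and finite_X2: "finite (multicells X2)"
begin

definition diag_rotate :: "nat \<Rightarrow> nat \<Rightarrow> mcell \<times> mcell \<Rightarrow> mcell \<times> mcell" where
  "diag_rotate i l z = (X1.rotate i l (fst z), X2.rotate i l (snd z))"

definition orbit :: "(mcell \<times> mcell) set" where
  "orbit = {z. (\<lambda>x y. \<exists>i\<in>{..d}. \<exists>l<k. y = diag_rotate i l x)\<^sup>*\<^sup>* (a1, a2) z}"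

lemma diag_rotate_orbit: "i \<le> d \<Longrightarrow> l < k \<Longrightarrow> z \<in> orbit \<Longrightarrow> diag_rotate i l z \<in> orbit"
  unfolding orbit_def by (auto intro: rtranclp.rtrancl_into_rtrancl)

lemma orbit_chambers: assumes "z \<in> orbit" shows "fst z \<in> X1.chambers \<and> snd z \<in> X2.chambers"
proof -
  have "(\<lambda>x y. \<exists>i\<in>{..d}. \<exists>l<k. y = diag_rotate i l x)\<^sup>*\<^sup>* (a1, a2) z" using assms unfolding orbit_def by simp
  thus ?thesis
  proof (induction rule: rtranclp_induct)
    case base then show ?case using X1.root_chamber X2.root_chamber by simp
  next
    case (step y z)
    then obtain i l where "i \<le> d" "l < k" "z = diag_rotate i l y" by blast
    thus ?case using X1.rotate_chamber X2.rotate_chamber step.IH unfolding diag_rotate_def by simp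
  qed
qed

lemma finite_orbit: "finite orbit"
proof (rule finite_subset)
  show "orbit \<subseteq> X1.chambers \<times> X2.chambers" using orbit_chambers by (auto simp: mem_Times_iff)
  show "finite (X1.chambers \<times> X2.chambers)" using finite_X1 finite_X2 unfolding mcells_card_def by simp
qed

sublocale Sys: chamber_system d k orbit diag_rotate "(a1, a2)"
proof
  show "1 \<le> k" by (rule k_pos)
  show "finite orbit" by (rule finite_orbit)
  show "(a1, a2) \<in> orbit" unfolding orbit_def by simp
  show "\<And>i l x. i \<le> d \<Longrightarrow> l < k \<Longrightarrow> x \<in> orbit \<Longrightarrow> diag_rotate i l x \<in> orbit"
    by (rule diag_rotate_orbit)
  show "\<And>i x. i \<le> d \<Longrightarrow> x \<in> orbit \<Longrightarrow> diag_rotate i 0 x = x"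
    using orbit_chambers X1.rotate_0 X2.rotate_0 unfolding diag_rotate_def by simp
  show "\<And>i l l' x. i \<le> d \<Longrightarrow> l < k \<Longrightarrow> l' < k \<Longrightarrow> x \<in> orbit \<Longrightarrow>
      diag_rotate i ((l + l') mod k) x = diag_rotate i l (diag_rotate i l' x)"
    using orbit_chambers X1.rotate_add X2.rotate_add unfolding diag_rotate_def by simp
  show "\<And>x. x \<in> orbit \<Longrightarrow> (\<lambda>x y. \<exists>i\<in>{..d}. \<exists>l<k. y = diag_rotate i l x)\<^sup>*\<^sup>* (a1, a2) x"
    unfolding orbit_def by simp
qed

sublocale Proj1: chamber_map d k orbit diag_rotate "(a1, a2)" X1 \<gamma>1 \<omega>1 a1 fst
  by unfold_locales (use orbit_chambers in \<open>auto simp: diag_rotate_def\<close>)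

sublocale Proj2: chamber_map d k orbit diag_rotate "(a1, a2)" X2 \<gamma>2 \<omega>2 a2 snd
  by unfold_locales (use orbit_chambers in \<open>auto simp: diag_rotate_def\<close>)

lemma common_link_connected_cover:
  "\<exists>Y \<gamma> \<omega> a \<pi>1 \<pi>2.
     obj d k Y \<gamma> \<omega> a \<and> finite (multicells Y) \<and> link_connected d Y \<and>
     morphism d k Y \<gamma> \<omega> a X1 \<gamma>1 \<omega>1 a1 \<pi>1 \<and> surjective_morphism Y X1 \<pi>1 \<and>
     morphism d k Y \<gamma> \<omega> a X2 \<gamma>2 \<omega>2 a2 \<pi>2 \<and> surjective_morphism Y X2 \<pi>2"
  using Sys.Y_obj Sys.Y_finite Sys.Y_link_connected Proj1.proj_morphism Proj1.proj_surjective
    Proj2.proj_morphism Proj2.proj_surjective by blast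

end

theorem corollary8:
  fixes d k :: nat
    and X1 X2 :: mcomplex
    and \<gamma>1 \<gamma>2 :: "nat \<Rightarrow> nat"
    and \<omega>1 \<omega>2 :: "mcell \<Rightarrow> nat \<Rightarrow> mcell \<Rightarrow> mcell"
    and a1 a2 :: mcell
  assumes "1 \<le> d" and "1 \<le> k"
    and "obj d k X1 \<gamma>1 \<omega>1 a1" and "finite (multicells X1)"
    and "obj d k X2 \<gamma>2 \<omega>2 a2" and "finite (multicells X2)"
  shows "\<exists>Y \<gamma> \<omega> a \<pi>1 \<pi>2.
           obj d k Y \<gamma> \<omega> a \<and> finite (multicells Y) \<and> link_connected d Y \<and>
           morphism d k Y \<gamma> \<omega> a X1 \<gamma>1 \<omega>1 a1 \<pi>1 \<and> surjective_morphism Y X1 \<pi>1 \<and>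
           morphism d k Y \<gamma> \<omega> a X2 \<gamma>2 \<omega>2 a2 \<pi>2 \<and> surjective_morphism Y X2 \<pi>2"
proof -
  interpret ck_object_pair d X1 \<gamma>1 k \<omega>1 a1 X2 \<gamma>2 \<omega>2 a2
    using assms unfolding ck_object_pair_def ck_object_axioms_def ck_object_pair_axioms_def
      colored_multicomplex_def colored_multicomplex_axioms_def d_multicomplex_def ck_object_def obj_def
    by auto
  show ?thesis by (rule common_link_connected_cover)
qed

end
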